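(* For every $j\in\mathbb Z$: (1) $\pi_j:X_j\to X_{j+1}$ is injective on the $1$-skeleton of $X_j$. (2) If $p$ is a $0$-cell of $X_j$ then $\pi_j^{-1}(\pi_j(p))=\{p\}$. (3) For every $p\in X_j$, $(\hat\pi^j)^{-1}(p)$ has at most $3$ points. (4) The link of every cell of $X_j$ contains at most $24$ cells. (5) For every $0$-cell $v$ of $X_j$, any two cells $\sigma,\sigma'$ of $X_j$ containing $v$ can be joined by a sequence $\sigma=\tau_1,\dots,\tau_\ell=\sigma'$ of cells of $X_j$ containing $v$, with $\tau_{i-1}$ and $\tau_i$ sharing a $1$-cell. (6) Every cell of $X_j$ contains at most $9$ open cells. (7) For every $N$ there is $C(N)$, independent of $j$, such that every combinatorial $N$-ball in $X_j$ contains at most $C(N)$ cells. (8) For every $2$-cell $\sigma$ of $X_j$, $(\hat\pi^j)^{-1}(\sigma)$ can be covered by at most $27$ $2$-cells of $Y_j$.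
   Context: Standing construction ($n=2$). Fix an integer $L\ge100$, $m=4$, $m_v=3L$. For $j\in\mathbb Z$, $Y_j$ is the cell complex on $\mathbb R^2$ given by the tiling by rectangles $[am^{-j},(a+1)m^{-j}]\times[bm_v^{-j},(b+1)m_v^{-j}]$, $a,b\in\mathbb Z$. Let $\Phi(x,y)=(m^{-1}x,m_v^{-1}y)$. For $k,\ell\in\mathbb Z$, $i\in\{1,2,3\}$, let $a_{k,\ell,i}=\{k+\tfrac i4\}\times[(3\ell+i-1)m_v^{-1},(3\ell+i)m_v^{-1}]$. $\mathcal R$ is the equivalence relation on $\mathbb R^2$ generated by $p\sim p+(0,m_v^{-1})$ for $p\in a_{k,\ell,i}$. $\Phi^j_*\mathcal R=\{(\Phi^jp,\Phi^jq):(p,q)\in\mathcal R\}$; $\mathcal R_j$ is generated by $\Phi^i_*\mathcal R$, $i<j$. $X_j=\mathbb R^2/\mathcal R_j$, $\hat\pi^j$ the quotient map, $\pi_j:X_j\to X_{j+1}$ the induced map. $X_j$ carries the CW structure whose open cells are the images under $\hat\pi^j$ of open cells of $Y_j$. A combinatorial $N$-ball in $X_j$ is the union of the closed cells reachable from a given cell by a chain (consecutive members intersect) of at most $N$ closed cells. *)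

theory Defs
  imports "HOL-Analysis.Analysis"
begin

(* Standing construction, n = 2, m = 4, m_v = 3L.  Points of R^2 are pairs real \<times> real. *)

definition mv :: "nat \<Rightarrow> real" where
  "mv L = real (3 * L)"

definition Phi :: "nat \<Rightarrow> int \<Rightarrow> real \<times> real \<Rightarrow> real \<times> real" where
  "Phi L j p = (fst p * (4::real) powi (- j), snd p * (mv L) powi (- j))"

definition Ycell :: "nat \<Rightarrow> int \<Rightarrow> nat \<Rightarrow> (real \<times> real) set \<Rightarrow> bool" where
  "Ycell L j d e \<longleftrightarrow> (\<exists>a b :: int.
     let sx = (4::real) powi (- j); sy = (mv L) powi (- j) in
     (d = 0 \<and> e = {(of_int a * sx, of_int b * sy)})
   \<or> (d = 1 \<and> (e = {of_int a * sx <..< (of_int a + 1) * sx} \<times> {of_int b * sy}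
             \<or> e = {of_int a * sx} \<times> {of_int b * sy <..< (of_int b + 1) * sy}))
   \<or> (d = 2 \<and> e = {of_int a * sx <..< (of_int a + 1) * sx} \<times> {of_int b * sy <..< (of_int b + 1) * sy}))"

definition seg :: "nat \<Rightarrow> int \<Rightarrow> int \<Rightarrow> int \<Rightarrow> (real \<times> real) set" where
  "seg L k l i = {of_int k + of_int i / 4} \<times>
      {(of_int (3 * l + i) - 1) / mv L .. of_int (3 * l + i) / mv L}"

definition eqclos :: "('a \<times> 'a) set \<Rightarrow> ('a \<times> 'a) set" where
  "eqclos r = (r \<union> r\<inverse>)\<^sup>*"

definition Rgen :: "nat \<Rightarrow> ((real \<times> real) \<times> (real \<times> real)) set" where
  "Rgen L = {(p, (fst p, snd p + 1 / mv L)) | p k l i. i \<in> {1, 2, 3} \<and> p \<in> seg L k l i}"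

definition Rbase :: "nat \<Rightarrow> ((real \<times> real) \<times> (real \<times> real)) set" where
  "Rbase L = eqclos (Rgen L)"

definition PhiRel :: "nat \<Rightarrow> int \<Rightarrow> ((real \<times> real) \<times> (real \<times> real)) set" where
  "PhiRel L i = map_prod (Phi L i) (Phi L i) ` Rbase L"

definition Rj :: "nat \<Rightarrow> int \<Rightarrow> ((real \<times> real) \<times> (real \<times> real)) set" where
  "Rj L j = eqclos (\<Union>i\<in>{i. i < j}. PhiRel L i)"

(* quotient map hat-pi^j : R^2 \<rightarrow> X_j ; points of X_j are equivalence classes *)
definition hatpi :: "nat \<Rightarrow> int \<Rightarrow> real \<times> real \<Rightarrow> (real \<times> real) set" where
  "hatpi L j p = Rj L j `` {p}"

definition X :: "nat \<Rightarrow> int \<Rightarrow> (real \<times> real) set set" where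
  "X L j = range (hatpi L j)"

definition pij :: "nat \<Rightarrow> int \<Rightarrow> (real \<times> real) set \<Rightarrow> (real \<times> real) set" where
  "pij L j c = Rj L (j + 1) `` c"

definition Xcell :: "nat \<Rightarrow> int \<Rightarrow> nat \<Rightarrow> (real \<times> real) set set \<Rightarrow> bool" where
  "Xcell L j d c \<longleftrightarrow> (\<exists>e. Ycell L j d e \<and> c = hatpi L j ` e)"

definition XcellAny :: "nat \<Rightarrow> int \<Rightarrow> (real \<times> real) set set \<Rightarrow> bool" where
  "XcellAny L j c \<longleftrightarrow> (\<exists>d. Xcell L j d c)"

definition Xclosed :: "nat \<Rightarrow> int \<Rightarrow> (real \<times> real) set set \<Rightarrow> (real \<times> real) set set" where
  "Xclosed L j c = \<Union>{hatpi L j ` closure e | e. (\<exists>d. Ycell L j d e) \<and> hatpi L j ` e = c}"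

definition skel1 :: "nat \<Rightarrow> int \<Rightarrow> (real \<times> real) set set" where
  "skel1 L j = \<Union>{c. Xcell L j 0 c \<or> Xcell L j 1 c}"

definition link :: "nat \<Rightarrow> int \<Rightarrow> (real \<times> real) set set \<Rightarrow> (real \<times> real) set set set" where
  "link L j c = {c'. XcellAny L j c' \<and> c' \<noteq> c \<and> Xclosed L j c \<subseteq> Xclosed L j c'}"

definition cball_comb :: "nat \<Rightarrow> int \<Rightarrow> nat \<Rightarrow> (real \<times> real) set set \<Rightarrow> (real \<times> real) set set" where
  "cball_comb L j N c = \<Union>{Xclosed L j (last cs) | cs.
      cs \<noteq> [] \<and> length cs \<le> N \<and> hd cs = c \<and> (\<forall>t\<in>set cs. XcellAny L j t) \<and>
      (\<forall>i. Suc i < length cs \<longrightarrow> Xclosed L j (cs ! i) \<inter> Xclosed L j (cs ! Suc i) \<noteq> {})}"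

end

theory Submission
  imports Defs
begin

text \<open>
  R_j only identifies points of the same block: the image under Phi^i, i < j, of a segment
  a_{k,l,i'} together with its translate by (0, 1/m_v). The blocks are pairwise disjoint vertical
  segments of length 2 m_v^-(i+1), and two points of a block are identified iff their heights
  differ by a multiple of m_v^-(i+1); hence every class has at most three points. Measured in the
  mesh of Y_j, a block of level i < j lies on a vertical grid line and has grid endpoints, so R_j
  identifies each cell of Y_j with vertical translates of itself, at most three at a time. The
  cells of X_j are therefore images of cells of Y_j, and the bounds (3), (4), (6), (7) and (8)
  reduce to counting faces and stars in the square grid. The identifications added in R_(j+1) come
  from blocks of level j, which avoid the vertical grid lines of Y_j and move points vertically by
  less than its mesh m_v^-j = 3L m_v^-(j+1); this gives (1) and (2). For (5), the star of a grid
  vertex is a cycle of eight cells, and the stars of two preimages of a vertex of X_j are joined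
  by glued vertical edges.
\<close>

section \<open>Cells of a one-dimensional grid\<close>

(* (a, True) indexes the open interval (a s, (a + 1) s) of the grid of mesh s,
   (a, False) the point a s. *)
definition grid_cell :: "real \<Rightarrow> int \<times> bool \<Rightarrow> real set" where
  "grid_cell s k =
     (if snd k then {of_int (fst k) * s <..< (of_int (fst k) + 1) * s} else {of_int (fst k) * s})"

definition grid_index :: "real \<Rightarrow> real \<Rightarrow> int \<times> bool" where
  "grid_index s x = (\<lfloor>x / s\<rfloor>, x \<noteq> of_int \<lfloor>x / s\<rfloor> * s)"

definition grid_faces :: "int \<times> bool \<Rightarrow> (int \<times> bool) set" where
  "grid_faces k = (if snd k then {k, (fst k, False), (fst k + 1, False)} else {k})"

definition grid_star :: "int \<times> bool \<Rightarrow> (int \<times> bool) set" where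
  "grid_star k = (if snd k then {k} else {k, (fst k, True), (fst k - 1, True)})"

lemma mem_grid_cell_iff:
  assumes s: "s > 0"
  shows "x \<in> grid_cell s k \<longleftrightarrow> grid_index s x = k"
proof (cases k)
  case (Pair a t)
  show ?thesis
  proof (cases t)
    case True
    have "x \<in> grid_cell s k \<longleftrightarrow> of_int a < x / s \<and> x / s < of_int a + 1"
      using s True Pair by (simp add: grid_cell_def field_simps)
    also have "\<dots> \<longleftrightarrow> \<lfloor>x / s\<rfloor> = a \<and> x \<noteq> of_int a * s"
      using s by (auto simp: floor_eq_iff field_simps)
    finally show ?thesis
      using True Pair by (auto simp: grid_index_def)
  qed (use s Pair in \<open>auto simp: grid_cell_def grid_index_def\<close>)
qed

lemma grid_index_of_int: "s > 0 \<Longrightarrow> grid_index s (of_int a * s) = (a, False)"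
  using mem_grid_cell_iff[of s "of_int a * s" "(a, False)"] by (simp add: grid_cell_def)

lemma closure_grid_cell:
  "s > 0 \<Longrightarrow> closure (grid_cell s k) =
     (if snd k then {of_int (fst k) * s .. (of_int (fst k) + 1) * s} else {of_int (fst k) * s})"
  by (simp add: grid_cell_def)

lemma mem_closure_grid_cell_iff:
  assumes s: "s > 0"
  shows "x \<in> closure (grid_cell s k) \<longleftrightarrow> grid_index s x \<in> grid_faces k"
proof -
  have "x \<in> closure (grid_cell s k) \<longleftrightarrow> (\<exists>k'\<in>grid_faces k. x \<in> grid_cell s k')"
    using s by (cases k) (auto simp: closure_grid_cell grid_faces_def grid_cell_def)
  then show ?thesis
    using mem_grid_cell_iff[OF s] by auto
qed

lemma closure_grid_cell_subset:
  assumes s: "s > 0" and x: "x \<in> grid_cell s k" "of_int A * s \<le> x" "x \<le> of_int B * s"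
  shows "closure (grid_cell s k) \<subseteq> {of_int A * s .. of_int B * s}"
proof (cases "snd k")
  case True
  with x have "of_int A * s < of_int (fst k + 1) * s" "of_int (fst k) * s < of_int B * s"
    by (auto simp: grid_cell_def)
  with s have "A \<le> fst k" "fst k + 1 \<le> B"
    by (simp_all add: mult_less_cancel_right_pos)
  then have "of_int A * s \<le> of_int (fst k) * s" "of_int (fst k + 1) * s \<le> of_int B * s"
    using s by (simp_all add: mult_right_mono)
  with True s show ?thesis
    by (auto simp: closure_grid_cell)
qed (use s x in \<open>auto simp: closure_grid_cell grid_cell_def\<close>)

lemma grid_cell_shift: "grid_cell s (a + d, t) = (+) (of_int d * s) ` grid_cell s (a, t)"
proof -
  have "grid_cell s (a + d, t) = (\<lambda>x. x - of_int d * s) -` grid_cell s (a, t)"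
    by (auto simp: grid_cell_def algebra_simps)
  also have "\<dots> = (+) (of_int d * s) ` grid_cell s (a, t)"
    by (force simp: algebra_simps)
  finally show ?thesis .
qed

lemma grid_cell_nonempty: "s > 0 \<Longrightarrow> grid_cell s k \<noteq> {}"
  by (auto simp: grid_cell_def)

lemma grid_faces_iff_star: "k' \<in> grid_faces k \<longleftrightarrow> k \<in> grid_star k'"
  by (cases k; cases k') (auto simp: grid_faces_def grid_star_def)

lemma grid_faces_trans: "k' \<in> grid_faces k \<Longrightarrow> k'' \<in> grid_faces k' \<Longrightarrow> k'' \<in> grid_faces k"
  by (auto simp: grid_faces_def split: if_splits)

lemma finite_grid_faces: "finite (grid_faces k)"
  by (simp add: grid_faces_def)

lemma finite_grid_star: "finite (grid_star k)"
  by (simp add: grid_star_def)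

lemma card_grid_faces: "card (grid_faces k) \<le> 3"
  by (simp add: grid_faces_def card_insert_if)

lemma card_grid_star: "card (grid_star k) \<le> 3"
  by (simp add: grid_star_def card_insert_if)

section \<open>The tiling Y_j\<close>

definition xmesh :: "int \<Rightarrow> real" where
  "xmesh j = 4 powi (- j)"

definition ymesh :: "nat \<Rightarrow> int \<Rightarrow> real" where
  "ymesh L j = mv L powi (- j)"

lemma xmesh_pos: "xmesh j > 0"
  by (simp add: xmesh_def)

locale standing_construction =
  fixes L :: nat
  assumes L_pos: "L > 0"

type_synonym cell_index = "(int \<times> bool) \<times> (int \<times> bool)"

definition ycell :: "nat \<Rightarrow> int \<Rightarrow> cell_index \<Rightarrow> (real \<times> real) set" where
  "ycell L j k = grid_cell (xmesh j) (fst k) \<times> grid_cell (ymesh L j) (snd k)"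

definition ycell_index :: "nat \<Rightarrow> int \<Rightarrow> real \<times> real \<Rightarrow> cell_index" where
  "ycell_index L j q = (grid_index (xmesh j) (fst q), grid_index (ymesh L j) (snd q))"

definition faces :: "cell_index \<Rightarrow> cell_index set" where
  "faces k = grid_faces (fst k) \<times> grid_faces (snd k)"

definition star :: "cell_index \<Rightarrow> cell_index set" where
  "star k = grid_star (fst k) \<times> grid_star (snd k)"

definition cell_dim :: "cell_index \<Rightarrow> nat" where
  "cell_dim k = of_bool (snd (fst k)) + of_bool (snd (snd k))"

definition vshift :: "cell_index \<Rightarrow> int \<Rightarrow> cell_index" where
  "vshift k d = (fst k, (fst (snd k) + d, snd (snd k)))"

definition square_of :: "cell_index \<Rightarrow> cell_index" where
  "square_of k = ((fst (fst k), True), (fst (snd k), True))"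

lemma faces_iff_star: "k' \<in> faces k \<longleftrightarrow> k \<in> star k'"
  by (simp add: faces_def star_def grid_faces_iff_star mem_Times_iff)

lemma faces_trans: "k' \<in> faces k \<Longrightarrow> k'' \<in> faces k' \<Longrightarrow> k'' \<in> faces k"
  by (auto simp: faces_def intro: grid_faces_trans)

lemma self_in_star: "k \<in> star k"
  by (simp add: star_def grid_star_def)

lemma in_faces_square_of: "k \<in> faces (square_of k)"
  by (cases k) (auto simp: faces_def square_of_def grid_faces_def)

lemma cell_dim_square_of: "cell_dim (square_of k) = 2"
  by (simp add: cell_dim_def square_of_def)

lemma cell_dim_vshift [simp]: "cell_dim (vshift k d) = cell_dim k"
  by (simp add: vshift_def cell_dim_def)

lemma finite_faces: "finite (faces k)"
  by (simp add: faces_def finite_grid_faces)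

lemma finite_star: "finite (star k)"
  by (simp add: star_def finite_grid_star)

lemma card_faces: "card (faces k) \<le> 9"
proof -
  have "card (faces k) = card (grid_faces (fst k)) * card (grid_faces (snd k))"
    by (simp add: faces_def card_cartesian_product)
  also have "\<dots> \<le> 3 * 3"
    by (intro mult_le_mono card_grid_faces)
  finally show ?thesis by simp
qed

lemma card_star: "card (star k) \<le> 9"
proof -
  have "card (star k) = card (grid_star (fst k)) * card (grid_star (snd k))"
    by (simp add: star_def card_cartesian_product)
  also have "\<dots> \<le> 3 * 3"
    by (intro mult_le_mono card_grid_star)
  finally show ?thesis by simp
qed

lemma card_star_minus_self: "card (star k - {k}) \<le> 8"
  using card_star[of k] self_in_star[of k] finite_star[of k] by (simp add: card_Diff_singleton)

lemma ycell_vshift: "ycell L j (vshift k d) = (+) (0, of_int d * ymesh L j) ` ycell L j k"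
proof -
  have "ycell L j (vshift k d) =
          grid_cell (xmesh j) (fst k) \<times> (+) (of_int d * ymesh L j) ` grid_cell (ymesh L j) (snd k)"
    by (cases "snd k") (simp add: ycell_def vshift_def grid_cell_shift)
  then show ?thesis
    by (force simp: ycell_def)
qed

lemma closure_ycell_vshift:
  "closure (ycell L j (vshift k d)) = (+) (0, of_int d * ymesh L j) ` closure (ycell L j k)"
  unfolding ycell_vshift by (rule closure_translation)

lemma Ycell_iff: "Ycell L j d e \<longleftrightarrow> (\<exists>k. cell_dim k = d \<and> e = ycell L j k)"
  unfolding Ycell_def Let_def split_paired_Ex ex_bool_eq
  by (auto simp: ycell_def grid_cell_def xmesh_def ymesh_def cell_dim_def; blast)

abbreviation xcell :: "nat \<Rightarrow> int \<Rightarrow> cell_index \<Rightarrow> (real \<times> real) set set" where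
  "xcell L j k \<equiv> hatpi L j ` ycell L j k"

lemma Xcell_iff: "Xcell L j d c \<longleftrightarrow> (\<exists>k. cell_dim k = d \<and> c = xcell L j k)"
  unfolding Xcell_def Ycell_iff by blast

lemma XcellAny_iff: "XcellAny L j c \<longleftrightarrow> (\<exists>k. c = xcell L j k)"
  unfolding XcellAny_def Xcell_iff by blast

context standing_construction
begin

lemma mv_pos: "mv L > 0"
  using L_pos by (simp add: mv_def)

lemma ymesh_pos: "ymesh L j > 0"
  using mv_pos by (simp add: ymesh_def)

lemma mem_ycell_iff: "q \<in> ycell L j k \<longleftrightarrow> ycell_index L j q = k"
  using mem_grid_cell_iff[OF xmesh_pos] mem_grid_cell_iff[OF ymesh_pos]
  by (auto simp: ycell_def ycell_index_def mem_Times_iff)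

lemma mem_ycell_index: "q \<in> ycell L j (ycell_index L j q)"
  by (simp add: mem_ycell_iff)

lemma mem_closure_ycell_iff: "q \<in> closure (ycell L j k) \<longleftrightarrow> ycell_index L j q \<in> faces k"
  using mem_closure_grid_cell_iff[OF xmesh_pos] mem_closure_grid_cell_iff[OF ymesh_pos]
  by (auto simp: ycell_def ycell_index_def faces_def closure_Times mem_Times_iff)

lemma ycell_nonempty: "ycell L j k \<noteq> {}"
  using grid_cell_nonempty[OF xmesh_pos] grid_cell_nonempty[OF ymesh_pos]
  by (simp add: ycell_def)

lemma ycell_subset_closure: "k' \<in> faces k \<Longrightarrow> ycell L j k' \<subseteq> closure (ycell L j k)"
  by (auto simp: mem_ycell_iff mem_closure_ycell_iff)

end

section \<open>The relation R_j\<close>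

lemma eqclos_least:
  assumes "r \<subseteq> E" and E: "equiv UNIV E"
  shows "eqclos r \<subseteq> E"
proof -
  from E have "sym E" "trans E" "Id \<subseteq> E"
    by (auto elim!: equivE simp: refl_on_def)
  with assms(1) have "r \<union> r\<inverse> \<subseteq> E"
    by (auto dest: symD)
  then have "(r \<union> r\<inverse>)\<^sup>* \<subseteq> E\<^sup>*"
    by (rule rtrancl_mono)
  also have "E\<^sup>* = E"
    using \<open>trans E\<close> \<open>Id \<subseteq> E\<close> by (auto simp: rtrancl_trancl_reflcl)
  finally show ?thesis
    by (simp add: eqclos_def)
qed

lemma subset_eqclos: "r \<subseteq> eqclos r"
  by (auto simp: eqclos_def)

lemma equiv_eqclos: "equiv UNIV (eqclos r)"
  unfolding eqclos_def by (intro equivI refl_rtrancl trans_rtrancl sym_rtrancl sym_Un_converse) auto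

lemma eqclos_sym: "(p, q) \<in> eqclos r \<Longrightarrow> (q, p) \<in> eqclos r"
  unfolding eqclos_def by (rule symD[OF sym_rtrancl[OF sym_Un_converse]])

lemma equiv_Rj: "equiv UNIV (Rj L j)"
  unfolding Rj_def by (rule equiv_eqclos)

lemma Rj_refl: "(p, p) \<in> Rj L j"
  by (simp add: Rj_def eqclos_def)

lemma Rj_sym: "(p, q) \<in> Rj L j \<Longrightarrow> (q, p) \<in> Rj L j"
  unfolding Rj_def by (rule eqclos_sym)

lemma Rj_trans: "(p, q) \<in> Rj L j \<Longrightarrow> (q, r) \<in> Rj L j \<Longrightarrow> (p, r) \<in> Rj L j"
  unfolding Rj_def eqclos_def by (rule rtrancl_trans)

lemma hatpi_eq_iff: "hatpi L j p = hatpi L j q \<longleftrightarrow> (p, q) \<in> Rj L j"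
  unfolding hatpi_def using equiv_class_eq_iff[OF equiv_Rj] by blast

lemma Rj_mono: "j \<le> j' \<Longrightarrow> Rj L j \<subseteq> Rj L j'"
  unfolding Rj_def eqclos_def by (intro rtrancl_mono) auto

lemma pij_hatpi: "pij L j (hatpi L j p) = hatpi L (j + 1) p"
proof
  show "pij L j (hatpi L j p) \<subseteq> hatpi L (j + 1) p"
    using Rj_mono[of j "j + 1" L] by (auto simp: pij_def hatpi_def intro: Rj_trans)
  show "hatpi L (j + 1) p \<subseteq> pij L j (hatpi L j p)"
    using Rj_refl by (auto simp: pij_def hatpi_def)
qed

lemma powi_level_unique:
  fixes m N1 N2 :: int
  assumes m: "m > 1" and N1: "\<not> m dvd N1" and N2: "\<not> m dvd N2"
    and eq: "of_int N1 * of_int m powi e1 = (of_int N2 * of_int m powi e2 :: real)"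
  shows "e1 = e2 \<and> N1 = N2"
proof -
  have *: "e1 = e2 \<and> N1 = N2"
    if le: "e1 \<le> e2" and N1: "\<not> m dvd N1" and eq: "of_int N1 * of_int m powi e1 = (of_int N2 * of_int m powi e2 :: real)"
    for e1 e2 N1 N2
  proof -
    have "(of_int m :: real) powi e2 = of_int m powi e1 * of_int m ^ nat (e2 - e1)"
      using m le by (simp add: power_int_add[symmetric] power_int_of_nat[symmetric])
    with eq m have "real_of_int N1 = of_int (N2 * m ^ nat (e2 - e1))"
      by simp
    then have N: "N1 = N2 * m ^ nat (e2 - e1)"
      by (simp only: of_int_eq_iff)
    with N1 have "nat (e2 - e1) = 0"
      by (metis dvd_mult dvd_power dvd_refl gr0I)
    with N le show ?thesis
      by simp
  qed
  show ?thesis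
    using *[of e1 e2 N1 N2] *[of e2 e1 N2 N1] N1 N2 eq by (cases "e1 \<le> e2") auto
qed

lemma map_prod_Id_surj: "surj f \<Longrightarrow> map_prod f f ` Id = Id"
  by (auto simp: Id_def image_iff) (metis surjD)

definition block_step :: "nat \<Rightarrow> int \<Rightarrow> real" where
  "block_step L i = mv L powi (- (i + 1))"

lemma block_step_0: "block_step L 0 = 1 / mv L"
  by (simp add: block_step_def power_int_minus inverse_eq_divide)

(* The image under Phi^i of a_{n,l,a} together with its translate by (0, 1/m_v). *)
definition block :: "nat \<Rightarrow> int \<Rightarrow> int \<Rightarrow> int \<Rightarrow> int \<Rightarrow> (real \<times> real) set" where
  "block L i n l a = {of_int (4 * n + a) * 4 powi (- (i + 1))} \<times>
     {of_int (3 * l + a - 1) * block_step L i .. of_int (3 * l + a + 1) * block_step L i}"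

definition block_rel :: "nat \<Rightarrow> int \<Rightarrow> int \<Rightarrow> int \<Rightarrow> int \<Rightarrow> real \<times> real \<Rightarrow> real \<times> real \<Rightarrow> bool" where
  "block_rel L i n l a p q \<longleftrightarrow> a \<in> {1, 2, 3} \<and> p \<in> block L i n l a \<and> q \<in> block L i n l a \<and>
     (\<exists>t::int. snd q = snd p + of_int t * block_step L i)"

definition level_rel :: "nat \<Rightarrow> int \<Rightarrow> ((real \<times> real) \<times> (real \<times> real)) set" where
  "level_rel L i = {(p, q). \<exists>n l a. block_rel L i n l a p q}"

lemma block_rel_sym:
  assumes "block_rel L i n l a p q"
  shows "block_rel L i n l a q p"
proof -
  obtain t :: int where "snd q = snd p + of_int t * block_step L i"
    using assms by (auto simp: block_rel_def)
  then have "snd p = snd q + of_int (- t) * block_step L i"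
    by simp
  with assms show ?thesis
    unfolding block_rel_def by blast
qed

lemma block_rel_fst: "block_rel L i n l a p q \<Longrightarrow> fst q = fst p"
  by (auto simp: block_rel_def block_def mem_Times_iff)

context standing_construction
begin

lemma block_step_pos: "block_step L i > 0"
  using mv_pos by (simp add: block_step_def)

lemma block_unique:
  assumes a1: "a1 \<in> {1, 2, 3}" and a2: "a2 \<in> {1, 2, 3}"
    and p1: "p \<in> block L i1 n1 l1 a1" and p2: "p \<in> block L i2 n2 l2 a2"
  shows "i1 = i2 \<and> n1 = n2 \<and> l1 = l2 \<and> a1 = a2"
proof -
  have "of_int (4 * n1 + a1) * of_int 4 powi (- (i1 + 1)) =
        (of_int (4 * n2 + a2) * of_int 4 powi (- (i2 + 1)) :: real)"
    using p1 p2 by (simp add: block_def mem_Times_iff)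
  moreover have "\<not> 4 dvd 4 * n1 + a1" "\<not> 4 dvd 4 * n2 + a2"
    using a1 a2 by (auto simp: dvd_eq_mod_eq_0)
  ultimately have "- (i1 + 1) = - (i2 + 1) \<and> 4 * n1 + a1 = 4 * n2 + a2"
    using powi_level_unique[of 4 "4 * n1 + a1" "4 * n2 + a2" "- (i1 + 1)" "- (i2 + 1)"] by simp
  then have i: "i1 = i2" and n: "4 * n1 + a1 = 4 * n2 + a2"
    by simp_all
  have a: "a1 = a2" and "n1 = n2"
    using n a1 a2 by (auto; presburger)+
  have "of_int (3 * l1 + a1 - 1) * block_step L i1 \<le> of_int (3 * l2 + a2 + 1) * block_step L i1"
       "of_int (3 * l2 + a2 - 1) * block_step L i1 \<le> of_int (3 * l1 + a1 + 1) * block_step L i1"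
    using p1 p2 i by (auto simp: block_def mem_Times_iff)
  then have "3 * l1 + a1 - 1 \<le> 3 * l2 + a2 + 1" "3 * l2 + a2 - 1 \<le> 3 * l1 + a1 + 1"
    using block_step_pos by (simp_all only: mult_le_cancel_right_pos of_int_le_iff)
  with a i \<open>n1 = n2\<close> show ?thesis
    by linarith
qed

lemma block_rel_trans:
  assumes pq: "block_rel L i1 n1 l1 a1 p q" and qr: "block_rel L i2 n2 l2 a2 q r"
  shows "i1 = i2 \<and> block_rel L i1 n1 l1 a1 p r"
proof -
  have "a1 \<in> {1, 2, 3}" "a2 \<in> {1, 2, 3}" "q \<in> block L i1 n1 l1 a1" "q \<in> block L i2 n2 l2 a2"
    using pq qr unfolding block_rel_def by blast+
  then have eq: "i1 = i2 \<and> n1 = n2 \<and> l1 = l2 \<and> a1 = a2"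
    by (rule block_unique)
  obtain t1 t2 :: int where "snd q = snd p + of_int t1 * block_step L i1"
    "snd r = snd q + of_int t2 * block_step L i2"
    using pq qr unfolding block_rel_def by blast
  with eq have "snd r = snd p + of_int (t1 + t2) * block_step L i1"
    by (simp add: algebra_simps)
  with pq qr eq show ?thesis
    unfolding block_rel_def by blast
qed

lemma level_rel_trans:
  "(p, q) \<in> level_rel L i1 \<Longrightarrow> (q, r) \<in> level_rel L i2 \<Longrightarrow> i1 = i2 \<and> (p, r) \<in> level_rel L i1"
  unfolding level_rel_def using block_rel_trans by blast

lemma level_rel_sym: "(p, q) \<in> level_rel L i \<Longrightarrow> (q, p) \<in> level_rel L i"
  unfolding level_rel_def using block_rel_sym by blast

lemma equiv_Id_Un_level_rels: "equiv UNIV (Id \<union> (\<Union>i\<in>I. level_rel L i))"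
proof (rule equivI)
  show "refl (Id \<union> (\<Union>i\<in>I. level_rel L i))"
    by (simp add: refl_on_def)
  show "sym (Id \<union> (\<Union>i\<in>I. level_rel L i))"
    by (rule symI) (blast dest: level_rel_sym)
  show "trans (Id \<union> (\<Union>i\<in>I. level_rel L i))"
    by (rule transI) (auto dest: level_rel_trans)
qed auto

lemma seg_lower_half_block:
  "seg L k l a = {of_int (4 * k + a) * 4 powi (- (0 + 1))} \<times>
     {of_int (3 * l + a - 1) * block_step L 0 .. of_int (3 * l + a) * block_step L 0}"
proof -
  have "of_int (4 * k + a) * (4::real) powi (- (0 + 1)) = of_int k + of_int a / 4"
       "of_int (3 * l + a - 1) * block_step L 0 = (of_int (3 * l + a) - 1) / mv L"
       "of_int (3 * l + a) * block_step L 0 = of_int (3 * l + a) / mv L"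
    by (simp_all add: block_step_0 power_int_minus field_simps)
  then show ?thesis
    by (simp only: seg_def)
qed

lemma Rgen_subset: "Rgen L \<subseteq> level_rel L 0"
proof
  fix z
  assume "z \<in> Rgen L"
  then obtain p n l a where z: "z = (p, (fst p, snd p + block_step L 0))"
    and a: "a \<in> {1, 2, 3}" and p: "p \<in> seg L n l a"
    unfolding Rgen_def block_step_0 by blast
  have "block_rel L 0 n l a p (fst p, snd p + of_int 1 * block_step L 0)"
    using a p block_step_pos[of 0]
    by (auto simp: block_rel_def block_def seg_lower_half_block mem_Times_iff algebra_simps)
  then show "z \<in> level_rel L 0"
    by (auto simp: z level_rel_def)
qed

lemma Rbase_up_step:
  assumes a: "a \<in> {1, 2, 3}" and r: "r \<in> block L 0 n l a"
    and r': "(fst r, snd r + block_step L 0) \<in> block L 0 n l a"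
  shows "(r, (fst r, snd r + block_step L 0)) \<in> Rbase L"
proof -
  have "r \<in> seg L n l a"
    using r r' by (auto simp: seg_lower_half_block block_def mem_Times_iff algebra_simps)
  with a have "(r, (fst r, snd r + block_step L 0)) \<in> Rgen L"
    unfolding Rgen_def block_step_0 by blast
  then show ?thesis
    unfolding Rbase_def using subset_eqclos by blast
qed

lemma block_rel_shift_bound:
  assumes "block_rel L i n l a p q"
  obtains t :: int where "snd q = snd p + of_int t * block_step L i" "\<bar>t\<bar> \<le> 2"
proof -
  obtain t :: int where t: "snd q = snd p + of_int t * block_step L i"
    using assms by (auto simp: block_rel_def)
  have "of_int t * block_step L i \<le> of_int 2 * block_step L i"
       "of_int (- 2) * block_step L i \<le> of_int t * block_step L i"
    using assms t by (auto simp: block_rel_def block_def mem_Times_iff algebra_simps)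
  then have "t \<le> 2" "- 2 \<le> t"
    using block_step_pos[of i] by (simp_all only: mult_le_cancel_right_pos of_int_le_iff)
  then have "\<bar>t\<bar> \<le> 2"
    by (simp add: abs_le_iff)
  with t show ?thesis
    using that by blast
qed

lemma block_rel0_upward_imp_Rbase:
  assumes pq: "block_rel L 0 n l a p q" and le: "snd p \<le> snd q"
  shows "(p, q) \<in> Rbase L"
proof -
  let ?h = "block_step L 0"
  obtain t :: int where t: "snd q = snd p + of_int t * ?h" "\<bar>t\<bar> \<le> 2"
    using pq by (rule block_rel_shift_bound)
  have "0 \<le> t"
    using le t(1) block_step_pos[of 0] by (simp add: zero_le_mult_iff)
  with t(2) consider "t = 0" | "t = 1" | "t = 2"
    by linarith
  moreover have a: "a \<in> {1, 2, 3}" and p: "p \<in> block L 0 n l a" and q: "q \<in> block L 0 n l a"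
    using pq by (auto simp: block_rel_def)
  moreover have fq: "fst q = fst p"
    using pq by (rule block_rel_fst)
  ultimately show ?thesis
  proof cases
    case 1
    with t fq have "q = p"
      by (simp add: prod_eq_iff)
    then show ?thesis
      by (simp add: Rbase_def eqclos_def)
  next
    case 2
    with t fq have "q = (fst p, snd p + ?h)"
      by (simp add: prod_eq_iff)
    with a p q show ?thesis
      using Rbase_up_step by simp
  next
    case 3
    let ?p' = "(fst p, snd p + ?h)"
    have p': "?p' \<in> block L 0 n l a"
      using p q 3 t block_step_pos[of 0] by (auto simp: block_def mem_Times_iff)
    have q': "(fst ?p', snd ?p' + ?h) = q"
      using 3 t fq by (simp add: prod_eq_iff)
    have "(p, ?p') \<in> Rbase L"
      by (rule Rbase_up_step[OF a p p'])
    moreover have "(?p', q) \<in> Rbase L"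
      using Rbase_up_step[OF a p'] q q' by simp
    ultimately show ?thesis
      unfolding Rbase_def eqclos_def by (rule rtrancl_trans)
  qed
qed

lemma block_rel0_imp_Rbase:
  assumes "block_rel L 0 n l a p q"
  shows "(p, q) \<in> Rbase L"
proof (cases "snd p \<le> snd q")
  case False
  then have "(q, p) \<in> Rbase L"
    using block_rel0_upward_imp_Rbase[OF block_rel_sym[OF assms]] by simp
  then show ?thesis
    unfolding Rbase_def by (rule eqclos_sym)
qed (use block_rel0_upward_imp_Rbase assms in blast)

lemma Rbase_eq: "Rbase L = Id \<union> level_rel L 0"
proof
  show "Rbase L \<subseteq> Id \<union> level_rel L 0"
    unfolding Rbase_def using Rgen_subset equiv_Id_Un_level_rels[of "{0}"]
    by (intro eqclos_least) auto
  show "Id \<union> level_rel L 0 \<subseteq> Rbase L"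
    using block_rel0_imp_Rbase by (auto simp: level_rel_def Rbase_def eqclos_def)
qed

lemma block_rel_Phi_iff:
  "block_rel L i n l a (Phi L i p) (Phi L i q) \<longleftrightarrow> block_rel L 0 n l a p q"
proof -
  define \<alpha> where "\<alpha> = (4::real) powi (- i)"
  define \<beta> where "\<beta> = mv L powi (- i)"
  have \<alpha>: "\<alpha> > 0" and \<beta>: "\<beta> > 0"
    using mv_pos by (simp_all add: \<alpha>_def \<beta>_def)
  have Phi: "Phi L i p = (fst p * \<alpha>, snd p * \<beta>)" for p
    by (simp add: Phi_def \<alpha>_def \<beta>_def)
  have x: "(4::real) powi (- (i + 1)) = 4 powi (- (0 + 1)) * \<alpha>"
    using power_int_add[of "4::real" "- 1" "- i"] by (simp add: \<alpha>_def add.commute)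
  have y: "block_step L i = block_step L 0 * \<beta>"
    using power_int_add[of "mv L" "- 1" "- i"] mv_pos
    by (simp add: block_step_def \<beta>_def add.commute)
  have mem: "Phi L i p \<in> block L i n l a \<longleftrightarrow> p \<in> block L 0 n l a" for p
    using \<alpha> \<beta> unfolding block_def mem_Times_iff Phi x y
    by (simp add: mult.assoc[symmetric] mult_le_cancel_right_pos)
  have shift: "snd (Phi L i q) = snd (Phi L i p) + of_int t * block_step L i \<longleftrightarrow>
               snd q = snd p + of_int t * block_step L 0" for t :: int
  proof -
    have "snd (Phi L i p) + of_int t * block_step L i = (snd p + of_int t * block_step L 0) * \<beta>"
      by (simp add: Phi y algebra_simps)
    with \<beta> show ?thesis
      by (simp add: Phi)
  qed
  show ?thesis
    unfolding block_rel_def mem shift ..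
qed

lemma Phi_surj: "surj (Phi L i)"
proof -
  have "Phi L i (fst p * 4 powi i, snd p * mv L powi i) = p" for p
    using mv_pos by (simp add: Phi_def mult.assoc power_int_minus)
  then show ?thesis
    by (rule surjI)
qed

lemma PhiRel_eq: "PhiRel L i = Id \<union> level_rel L i"
proof -
  have "PhiRel L i = map_prod (Phi L i) (Phi L i) ` Id \<union> map_prod (Phi L i) (Phi L i) ` level_rel L 0"
    by (simp add: PhiRel_def Rbase_eq image_Un)
  also have "map_prod (Phi L i) (Phi L i) ` Id = Id"
    using Phi_surj by (rule map_prod_Id_surj)
  also have "map_prod (Phi L i) (Phi L i) ` level_rel L 0 = level_rel L i"
  proof
    show "map_prod (Phi L i) (Phi L i) ` level_rel L 0 \<subseteq> level_rel L i"
      by (force simp: level_rel_def block_rel_Phi_iff)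
    show "level_rel L i \<subseteq> map_prod (Phi L i) (Phi L i) ` level_rel L 0"
    proof
      fix z
      assume z: "z \<in> level_rel L i"
      obtain p q where "fst z = Phi L i p" "snd z = Phi L i q"
        using surjD[OF Phi_surj] by metis
      then have "z = (Phi L i p, Phi L i q)"
        by (simp add: prod_eq_iff)
      with z show "z \<in> map_prod (Phi L i) (Phi L i) ` level_rel L 0"
        by (auto simp: level_rel_def block_rel_Phi_iff)
    qed
  qed
  finally show ?thesis .
qed

lemma Rj_eq: "Rj L j = Id \<union> (\<Union>i\<in>{i. i < j}. level_rel L i)"
proof
  show "Rj L j \<subseteq> Id \<union> (\<Union>i\<in>{i. i < j}. level_rel L i)"
    unfolding Rj_def PhiRel_eq using equiv_Id_Un_level_rels
    by (intro eqclos_least) auto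
  show "Id \<union> (\<Union>i\<in>{i. i < j}. level_rel L i) \<subseteq> Rj L j"
  proof (intro Un_least UN_least)
    show "Id \<subseteq> Rj L j"
      using Rj_refl by auto
    fix i
    assume "i \<in> {i. i < j}"
    then have "level_rel L i \<subseteq> (\<Union>i\<in>{i. i < j}. PhiRel L i)"
      by (auto simp: PhiRel_eq)
    then show "level_rel L i \<subseteq> Rj L j"
      unfolding Rj_def using subset_eqclos by blast
  qed
qed

lemma Rj_iff: "(p, q) \<in> Rj L j \<longleftrightarrow> p = q \<or> (\<exists>i<j. \<exists>n l a. block_rel L i n l a p q)"
  by (auto simp: Rj_eq level_rel_def)

lemma Rj_succ_iff:
  "(p, q) \<in> Rj L (j + 1) \<longleftrightarrow> (p, q) \<in> Rj L j \<or> (\<exists>n l a. block_rel L j n l a p q)"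
  unfolding Rj_iff by (metis zless_add1_eq)

end

section \<open>Gluing of cells\<close>

lemma power_int_neg_split:
  fixes x :: real
  assumes "x \<noteq> 0" "e \<le> e'"
  shows "x powi (- e) = x ^ nat (e' - e) * x powi (- e')"
proof -
  have "x powi (- e) = x powi (e' - e) * x powi (- e')"
    using assms(1) by (simp add: power_int_add[symmetric])
  also have "x powi (e' - e) = x ^ nat (e' - e)"
    using assms by (simp add: power_int_nonneg_exp)
  finally show ?thesis .
qed

lemma card_int_window:
  fixes a y h :: real
  assumes h: "h > 0"
  shows "finite {t::int. a \<le> y + of_int t * h \<and> y + of_int t * h \<le> a + 2 * h}
    \<and> card {t::int. a \<le> y + of_int t * h \<and> y + of_int t * h \<le> a + 2 * h} \<le> 3"
proof -
  define T where "T = \<lceil>(a - y) / h\<rceil>"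
  have "{t::int. a \<le> y + of_int t * h \<and> y + of_int t * h \<le> a + 2 * h} \<subseteq> {T .. T + 2}"
  proof
    fix t :: int
    assume "t \<in> {t. a \<le> y + of_int t * h \<and> y + of_int t * h \<le> a + 2 * h}"
    with h have t: "(a - y) / h \<le> of_int t" "of_int t \<le> (a - y) / h + 2"
      by (simp_all add: field_simps)
    have "(a - y) / h \<le> of_int T"
      unfolding T_def by (rule le_of_int_ceiling)
    with t have "of_int t \<le> (of_int (T + 2) :: real)"
      by simp
    moreover have "T \<le> t"
      unfolding T_def ceiling_le_iff by (fact t(1))
    ultimately show "t \<in> {T .. T + 2}"
      by (simp only: of_int_le_iff atLeastAtMost_iff)
  qed
  moreover have "card {T .. T + 2} = 3"
    by simp
  ultimately show ?thesis
    using card_mono[of "{T .. T + 2}"] finite_subset[of _ "{T .. T + 2}"] by fastforce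
qed

lemma hatpi_translate_image:
  assumes "\<forall>z\<in>S. (z, z + v) \<in> Rj L j"
  shows "hatpi L j ` ((+) v ` S) = hatpi L j ` S"
proof -
  have "hatpi L j (v + z) = hatpi L j z" if "z \<in> S" for z
  proof -
    have "(z, z + v) \<in> Rj L j"
      using assms that by blast
    then have "(z, v + z) \<in> Rj L j"
      by (metis add.commute)
    then show ?thesis
      by (simp add: hatpi_eq_iff Rj_sym)
  qed
  then show ?thesis
    by (auto simp: image_image intro: image_eqI)
qed

definition vblock :: "nat \<Rightarrow> int \<Rightarrow> int \<Rightarrow> int \<Rightarrow> int \<Rightarrow> (real \<times> real) set" where
  "vblock L j u b M = {of_int u * xmesh j} \<times> {of_int b * ymesh L j .. of_int (b + 2 * M) * ymesh L j}"

definition vblock_glued :: "nat \<Rightarrow> int \<Rightarrow> int \<Rightarrow> int \<Rightarrow> int \<Rightarrow> bool" where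
  "vblock_glued L j u b M \<longleftrightarrow> (\<forall>p\<in>vblock L j u b M. \<forall>q\<in>vblock L j u b M.
     \<forall>t::int. snd q = snd p + of_int (t * M) * ymesh L j \<longrightarrow> (p, q) \<in> Rj L j)"

context standing_construction
begin

(* Measured in the mesh of Y_j, a block of a level i < j is a segment {u} \<times> [b, b + 2 M]
   with M = (3L)^(j - i - 1), and its points are related iff they differ by a multiple of M. *)
lemma block_rel_in_grid_units:
  assumes ij: "i < j" and a: "a \<in> {1, 2, 3}"
  obtains u b M where "M \<ge> 1"
    "\<And>p q. block_rel L i n l a p q \<longleftrightarrow> p \<in> vblock L j u b M \<and> q \<in> vblock L j u b M \<and>
        (\<exists>t. snd q = snd p + of_int (t * M) * ymesh L j)"
proof -
  define M where "M = (3 * int L) ^ nat (j - (i + 1))"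
  define u where "u = (4 * n + a) * 4 ^ nat (j - (i + 1))"
  define b where "b = (3 * l + a - 1) * M"
  have "1 \<le> 3 * int L"
    using L_pos by simp
  then have "M \<ge> 1"
    unfolding M_def by (rule one_le_power)
  have step: "block_step L i = of_int M * ymesh L j"
    using power_int_neg_split[of "mv L" "i + 1" j] mv_pos ij
    by (simp add: block_step_def ymesh_def M_def mv_def)
  have x: "of_int (4 * n + a) * (4::real) powi (- (i + 1)) = of_int u * xmesh j"
    using power_int_neg_split[of 4 "i + 1" j] ij by (simp add: u_def xmesh_def)
  have "block L i n l a = vblock L j u b M"
    unfolding block_def vblock_def x by (simp add: step b_def algebra_simps)
  moreover have "(\<exists>t::int. y' = y + of_int t * block_step L i) \<longleftrightarrow>
                 (\<exists>t. y' = y + of_int (t * M) * ymesh L j)" for y y'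
    by (simp add: step mult.assoc)
  ultimately show ?thesis
    using that[OF \<open>M \<ge> 1\<close>] a by (simp add: block_rel_def)
qed

lemma closure_ycell_subset_vblock:
  assumes p: "p \<in> ycell L j k" "p \<in> vblock L j u b M"
  shows "closure (ycell L j k) \<subseteq> vblock L j u b M"
proof -
  have "fst k = (u, False)"
    using p mem_ycell_iff grid_index_of_int[OF xmesh_pos]
    by (auto simp: vblock_def ycell_index_def mem_Times_iff)
  then have "closure (grid_cell (xmesh j) (fst k)) = {of_int u * xmesh j}"
    by (simp add: grid_cell_def)
  moreover have "closure (grid_cell (ymesh L j) (snd k)) \<subseteq>
                   {of_int b * ymesh L j .. of_int (b + 2 * M) * ymesh L j}"
    using p by (intro closure_grid_cell_subset ymesh_pos)
      (auto simp: ycell_def vblock_def mem_Times_iff)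
  ultimately show ?thesis
    by (auto simp: ycell_def vblock_def closure_Times)
qed

lemma Rj_translates_cell:
  assumes pq: "(p, q) \<in> Rj L j" and p: "p \<in> ycell L j k"
  obtains d where "q \<in> ycell L j (vshift k d)"
    "\<And>z. z \<in> closure (ycell L j k) \<Longrightarrow> (z, z + (0, of_int d * ymesh L j)) \<in> Rj L j"
proof (cases "p = q")
  case True
  with p show ?thesis
    using that[of 0] Rj_refl by (simp add: vshift_def zero_prod_def[symmetric])
next
  case False
  then obtain i n l a where ij: "i < j" and h: "block_rel L i n l a p q"
    using pq Rj_iff by blast
  then have a: "a \<in> {1, 2, 3}"
    by (simp add: block_rel_def)
  obtain u b M where rel: "\<And>p q. block_rel L i n l a p q \<longleftrightarrow> p \<in> vblock L j u b M \<and>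
      q \<in> vblock L j u b M \<and> (\<exists>t. snd q = snd p + of_int (t * M) * ymesh L j)"
    using block_rel_in_grid_units[OF ij a] by metis
  obtain t where t: "snd q = snd p + of_int (t * M) * ymesh L j"
    using h rel by blast
  let ?v = "(0, of_int (t * M) * ymesh L j)"
  have q: "q = ?v + p"
    using t block_rel_fst[OF h] by (simp add: prod_eq_iff)
  show ?thesis
  proof (rule that)
    show q_in: "q \<in> ycell L j (vshift k (t * M))"
      using p q by (simp add: ycell_vshift)
    fix z
    assume z: "z \<in> closure (ycell L j k)"
    have pb: "p \<in> vblock L j u b M" and qb: "q \<in> vblock L j u b M"
      using h rel by blast+
    have "z \<in> vblock L j u b M" "?v + z \<in> vblock L j u b M"
      using closure_ycell_subset_vblock[OF p pb] closure_ycell_subset_vblock[OF q_in qb] z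
      by (auto simp: closure_ycell_vshift)
    then have "block_rel L i n l a z (z + ?v)"
      using rel by (auto simp: add.commute)
    then show "(z, z + ?v) \<in> Rj L j"
      using ij Rj_iff by blast
  qed
qed

lemma Rj_glues_cells:
  assumes pq: "(p, q) \<in> Rj L j" and p: "p \<in> ycell L j k" and q: "q \<in> ycell L j k'"
  shows "cell_dim k' = cell_dim k" "xcell L j k' = xcell L j k"
    "hatpi L j ` closure (ycell L j k') = hatpi L j ` closure (ycell L j k)"
proof -
  obtain d where qd: "q \<in> ycell L j (vshift k d)"
    and rel: "\<And>z. z \<in> closure (ycell L j k) \<Longrightarrow> (z, z + (0, of_int d * ymesh L j)) \<in> Rj L j"
    using Rj_translates_cell[OF pq p] by blast
  have k': "k' = vshift k d"
    using q qd by (simp add: mem_ycell_iff)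
  then show "cell_dim k' = cell_dim k"
    by simp
  show "hatpi L j ` closure (ycell L j k') = hatpi L j ` closure (ycell L j k)"
    unfolding k' closure_ycell_vshift using rel by (intro hatpi_translate_image) blast
  show "xcell L j k' = xcell L j k"
    unfolding k' ycell_vshift using rel closure_subset by (intro hatpi_translate_image) blast
qed

lemma Rj_imp_block_rel:
  assumes h0: "block_rel L i n l a p q0" and pq: "(p, q) \<in> Rj L j"
  shows "block_rel L i n l a p q"
proof (cases "q = p")
  case True
  with h0 show ?thesis
    by (auto simp: block_rel_def intro: exI[of _ 0])
next
  case False
  then obtain i' n' l' a' where "block_rel L i' n' l' a' p q"
    using pq Rj_iff by metis
  with block_rel_trans[OF block_rel_sym[OF h0]] have "block_rel L i n l a q0 q"
    by blast
  with block_rel_trans[OF h0] show ?thesis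
    by blast
qed

lemma Rj_class_card: "finite {q. (p, q) \<in> Rj L j} \<and> card {q. (p, q) \<in> Rj L j} \<le> 3"
proof (cases "{q. (p, q) \<in> Rj L j} = {p}")
  case False
  then obtain q0 where "(p, q0) \<in> Rj L j" "q0 \<noteq> p"
    using Rj_refl by blast
  then obtain i n l a where h0: "block_rel L i n l a p q0"
    using Rj_iff by metis
  let ?h = "block_step L i" and ?y0 = "of_int (3 * l + a - 1) * block_step L i"
  let ?W = "{t::int. ?y0 \<le> snd p + of_int t * ?h \<and> snd p + of_int t * ?h \<le> ?y0 + 2 * ?h}"
  have "{q. (p, q) \<in> Rj L j} \<subseteq> (\<lambda>t. (fst p, snd p + of_int t * ?h)) ` ?W"
  proof
    fix q
    assume "q \<in> {q. (p, q) \<in> Rj L j}"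
    then have "block_rel L i n l a p q"
      using Rj_imp_block_rel[OF h0] by blast
    then obtain t :: int where "snd q = snd p + of_int t * ?h" "fst q = fst p"
      "?y0 \<le> snd q" "snd q \<le> ?y0 + 2 * ?h"
      by (auto simp: block_rel_def block_def mem_Times_iff algebra_simps)
    then show "q \<in> (\<lambda>t. (fst p, snd p + of_int t * ?h)) ` ?W"
      by (auto simp: prod_eq_iff)
  qed
  moreover have "finite ?W" "card ?W \<le> 3"
    using card_int_window[OF block_step_pos] by blast+
  ultimately show ?thesis
    by (meson card_image_le finite_imageI finite_subset card_mono le_trans)
qed simp

end

section \<open>Local finiteness of X_j\<close>

lemma finite_card_le_if_subset_image:
  assumes "S \<subseteq> f ` T" "finite T" "card T \<le> n"
  shows "finite S \<and> card S \<le> n"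
  using assms finite_surj[of T S f] surj_card_le[of T S f] by simp

lemma finite_card_UN_le:
  assumes "finite A" "\<And>a. a \<in> A \<Longrightarrow> finite (B a) \<and> card (B a) \<le> m"
  shows "finite (\<Union>a\<in>A. B a) \<and> card (\<Union>a\<in>A. B a) \<le> card A * m"
proof -
  have "card (\<Union>a\<in>A. B a) \<le> (\<Sum>a\<in>A. card (B a))"
    by (rule card_UN_le[OF assms(1)])
  also have "\<dots> \<le> card A * m"
    using assms(2) sum_bounded_above[of A "\<lambda>a. card (B a)" m] by simp
  finally show ?thesis
    using assms by auto
qed

definition glued :: "nat \<Rightarrow> int \<Rightarrow> cell_index \<Rightarrow> cell_index set" where
  "glued L j k = {k'. xcell L j k' = xcell L j k}"

definition neighbours :: "nat \<Rightarrow> int \<Rightarrow> (real \<times> real) set set \<Rightarrow> (real \<times> real) set set set" where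
  "neighbours L j t = {c. XcellAny L j c \<and> Xclosed L j c \<inter> Xclosed L j t \<noteq> {}}"

fun ball_cells :: "nat \<Rightarrow> int \<Rightarrow> nat \<Rightarrow> (real \<times> real) set set \<Rightarrow> (real \<times> real) set set set" where
  "ball_cells L j 0 c = {}"
| "ball_cells L j (Suc n) c = insert c (\<Union>(neighbours L j ` ball_cells L j n c))"

lemma ball_cells_XcellAny: "XcellAny L j c \<Longrightarrow> t \<in> ball_cells L j n c \<Longrightarrow> XcellAny L j t"
  by (induction n arbitrary: t) (auto simp: neighbours_def)

lemma chain_last_in_ball_cells:
  assumes "cs \<noteq> []" "length cs \<le> n" "hd cs = c" "\<forall>t\<in>set cs. XcellAny L j t"
    "successively (\<lambda>s t. Xclosed L j s \<inter> Xclosed L j t \<noteq> {}) cs"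
  shows "last cs \<in> ball_cells L j n c"
  using assms
proof (induction cs arbitrary: n rule: rev_induct)
  case (snoc x xs)
  then obtain m where n: "n = Suc m"
    by (cases n) auto
  show ?case
  proof (cases "xs = []")
    case False
    with snoc.prems have "last xs \<in> ball_cells L j m c"
      by (intro snoc.IH) (auto simp: n successively_append_iff)
    moreover have "x \<in> neighbours L j (last xs)"
      using snoc.prems False by (auto simp: neighbours_def successively_append_iff)
    ultimately show ?thesis
      by (auto simp: n)
  qed (use snoc.prems n in simp)
qed simp

context standing_construction
begin

lemma xcell_ycell_index_eq:
  "hatpi L j q' = hatpi L j q \<Longrightarrow> xcell L j (ycell_index L j q') = xcell L j (ycell_index L j q)"
  using Rj_glues_cells(2)[OF _ mem_ycell_index mem_ycell_index]
  by (simp add: hatpi_eq_iff)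

lemma glued_subset_class:
  assumes "p \<in> ycell L j k"
  shows "glued L j k \<subseteq> ycell_index L j ` {q. (p, q) \<in> Rj L j}"
proof
  fix k'
  assume "k' \<in> glued L j k"
  then have "hatpi L j p \<in> xcell L j k'"
    using assms by (auto simp: glued_def)
  then obtain q where "q \<in> ycell L j k'" "hatpi L j q = hatpi L j p"
    by auto
  then show "k' \<in> ycell_index L j ` {q. (p, q) \<in> Rj L j}"
    by (auto simp: mem_ycell_iff hatpi_eq_iff intro: Rj_sym)
qed

lemma glued_card: "finite (glued L j k) \<and> card (glued L j k) \<le> 3"
proof -
  obtain p where "p \<in> ycell L j k"
    using ycell_nonempty by blast
  then have "glued L j k \<subseteq> ycell_index L j ` {q. (p, q) \<in> Rj L j}"
    by (rule glued_subset_class)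
  then show ?thesis
    using Rj_class_card finite_card_le_if_subset_image by blast
qed

lemma glued_closure:
  assumes "k' \<in> glued L j k"
  shows "hatpi L j ` closure (ycell L j k') = hatpi L j ` closure (ycell L j k)"
proof -
  obtain p where p: "p \<in> ycell L j k"
    using ycell_nonempty by blast
  with assms glued_subset_class obtain q where "(p, q) \<in> Rj L j" "k' = ycell_index L j q"
    by blast
  then show ?thesis
    using Rj_glues_cells(3)[OF _ p mem_ycell_index] by simp
qed

lemma Xclosed_xcell: "Xclosed L j (xcell L j k) = hatpi L j ` closure (ycell L j k)"
proof -
  have "{hatpi L j ` closure e | e. (\<exists>d. Ycell L j d e) \<and> hatpi L j ` e = xcell L j k} =
        {hatpi L j ` closure (ycell L j k)}"
  proof (rule set_eqI, rule iffI)
    fix A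
    assume "A \<in> {hatpi L j ` closure e | e. (\<exists>d. Ycell L j d e) \<and> hatpi L j ` e = xcell L j k}"
    then obtain k' where "A = hatpi L j ` closure (ycell L j k')" "k' \<in> glued L j k"
      by (auto simp: Ycell_iff glued_def)
    then show "A \<in> {hatpi L j ` closure (ycell L j k)}"
      using glued_closure by simp
  next
    fix A
    assume "A \<in> {hatpi L j ` closure (ycell L j k)}"
    moreover have "Ycell L j (cell_dim k) (ycell L j k)"
      unfolding Ycell_iff by blast
    ultimately show "A \<in> {hatpi L j ` closure e | e. (\<exists>d. Ycell L j d e) \<and> hatpi L j ` e = xcell L j k}"
      by blast
  qed
  then show ?thesis
    by (simp add: Xclosed_def)
qed

lemma xcell_subset_Xclosed: "xcell L j k \<subseteq> Xclosed L j (xcell L j k)"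
  unfolding Xclosed_xcell using closure_subset by (rule image_mono)

lemma mem_Xclosed_xcell:
  assumes "v \<in> Xclosed L j (xcell L j k)"
  obtains q where "q \<in> closure (ycell L j k)" "hatpi L j q = v" "ycell_index L j q \<in> faces k"
  using assms by (auto simp: Xclosed_xcell mem_closure_ycell_iff)

lemma hatpi_fibre_card:
  assumes "P \<in> X L j"
  shows "finite {x. hatpi L j x = P} \<and> card {x. hatpi L j x = P} \<le> 3"
proof -
  obtain p where "P = hatpi L j p"
    using assms by (auto simp: X_def)
  then have "{x. hatpi L j x = P} = {q. (p, q) \<in> Rj L j}"
    by (auto simp: hatpi_eq_iff intro: Rj_sym)
  then show ?thesis
    using Rj_class_card by simp
qed

lemma link_subset:
  assumes p: "p \<in> ycell L j k"
  shows "link L j (xcell L j k) \<subseteq>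
    xcell L j ` (\<Union>q\<in>{q. (p, q) \<in> Rj L j}. star (ycell_index L j q) - {ycell_index L j q})"
proof
  fix c'
  assume "c' \<in> link L j (xcell L j k)"
  then have c': "XcellAny L j c'" "c' \<noteq> xcell L j k" "Xclosed L j (xcell L j k) \<subseteq> Xclosed L j c'"
    by (auto simp: link_def)
  obtain k' where k': "c' = xcell L j k'"
    using c'(1) XcellAny_iff by blast
  have "hatpi L j p \<in> Xclosed L j c'"
    using xcell_subset_Xclosed[of j k] p c'(3) by blast
  then obtain q where q: "hatpi L j q = hatpi L j p" "ycell_index L j q \<in> faces k'"
    unfolding k' by (rule mem_Xclosed_xcell)
  have "xcell L j (ycell_index L j q) = xcell L j k"
    using xcell_ycell_index_eq[OF q(1)] p by (simp add: mem_ycell_iff)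
  with c'(2) k' have "k' \<noteq> ycell_index L j q"
    by blast
  moreover have "(p, q) \<in> Rj L j"
    using q(1) by (simp add: hatpi_eq_iff Rj_sym)
  ultimately have "k' \<in> (\<Union>q\<in>{q. (p, q) \<in> Rj L j}. star (ycell_index L j q) - {ycell_index L j q})"
    using q(2) faces_iff_star by blast
  with k' show "c' \<in> xcell L j ` (\<Union>q\<in>{q. (p, q) \<in> Rj L j}. star (ycell_index L j q) - {ycell_index L j q})"
    by blast
qed

lemma link_card:
  assumes "XcellAny L j c"
  shows "finite (link L j c) \<and> card (link L j c) \<le> 24"
proof -
  obtain k where c: "c = xcell L j k"
    using assms XcellAny_iff by blast
  obtain p where p: "p \<in> ycell L j k"
    using ycell_nonempty by blast
  define C where "C = {q. (p, q) \<in> Rj L j}"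
  have C: "finite C" "card C \<le> 3"
    using Rj_class_card by (auto simp: C_def)
  define S where "S = (\<Union>q\<in>C. star (ycell_index L j q) - {ycell_index L j q})"
  have S: "finite S \<and> card S \<le> card C * 8"
    unfolding S_def using C(1) card_star_minus_self finite_star
    by (intro finite_card_UN_le) auto
  moreover have "link L j c \<subseteq> xcell L j ` S"
    using link_subset[OF p] by (simp add: c S_def C_def)
  moreover have "card C * 8 \<le> 24"
    using C(2) by simp
  ultimately show ?thesis
    using finite_card_le_if_subset_image by (meson le_trans)
qed

lemma closed_cell_card:
  assumes "XcellAny L j c"
  shows "finite {c'. XcellAny L j c' \<and> c' \<subseteq> Xclosed L j c}
    \<and> card {c'. XcellAny L j c' \<and> c' \<subseteq> Xclosed L j c} \<le> 9"
proof -
  obtain k where c: "c = xcell L j k"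
    using assms XcellAny_iff by blast
  have "{c'. XcellAny L j c' \<and> c' \<subseteq> Xclosed L j c} \<subseteq> xcell L j ` faces k"
  proof
    fix c'
    assume "c' \<in> {c'. XcellAny L j c' \<and> c' \<subseteq> Xclosed L j c}"
    then have "XcellAny L j c'" and sub: "c' \<subseteq> Xclosed L j c"
      by simp_all
    then obtain k' where k': "c' = xcell L j k'"
      using XcellAny_iff by blast
    obtain p' where p': "p' \<in> ycell L j k'"
      using ycell_nonempty by blast
    then have "hatpi L j p' \<in> Xclosed L j (xcell L j k)"
      using sub k' c by blast
    then obtain q where q: "hatpi L j q = hatpi L j p'" "ycell_index L j q \<in> faces k"
      by (rule mem_Xclosed_xcell)
    have "c' = xcell L j (ycell_index L j q)"
      using xcell_ycell_index_eq[OF q(1)] p' by (simp add: k' mem_ycell_iff)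
    with q(2) show "c' \<in> xcell L j ` faces k"
      by blast
  qed
  then show ?thesis
    using finite_faces card_faces by (rule finite_card_le_if_subset_image)
qed

lemma Xcell2_preimage_cover:
  assumes "Xcell L j 2 c"
  shows "\<exists>F. finite F \<and> card F \<le> 27 \<and> (\<forall>e\<in>F. \<exists>e0. Ycell L j 2 e0 \<and> e = closure e0) \<and>
    {x. hatpi L j x \<in> Xclosed L j c} \<subseteq> \<Union>F"
proof -
  obtain k where c: "c = xcell L j k"
    using assms Xcell_iff by blast
  define T where "T = (\<Union>f\<in>faces k. glued L j f)"
  define F where "F = (\<lambda>k'. closure (ycell L j (square_of k'))) ` T"
  have T: "finite T \<and> card T \<le> card (faces k) * 3"
    unfolding T_def using finite_faces glued_card by (rule finite_card_UN_le)
  moreover have "card (faces k) * 3 \<le> 27"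
    using card_faces[of k] by simp
  moreover have "card F \<le> card T"
    unfolding F_def using T by (intro card_image_le) blast
  ultimately have "finite F" "card F \<le> 27"
    by (simp_all add: F_def)
  moreover have "\<forall>e\<in>F. \<exists>e0. Ycell L j 2 e0 \<and> e = closure e0"
    unfolding F_def Ycell_iff using cell_dim_square_of by blast
  moreover have "{x. hatpi L j x \<in> Xclosed L j c} \<subseteq> \<Union>F"
  proof
    fix x
    assume "x \<in> {x. hatpi L j x \<in> Xclosed L j c}"
    then have "hatpi L j x \<in> Xclosed L j (xcell L j k)"
      by (simp add: c)
    then obtain q where q: "hatpi L j q = hatpi L j x" "ycell_index L j q \<in> faces k"
      by (rule mem_Xclosed_xcell)
    then have "ycell_index L j x \<in> T"
      using xcell_ycell_index_eq[of j x q] by (auto simp: T_def glued_def)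
    moreover have "x \<in> closure (ycell L j (square_of (ycell_index L j x)))"
      using ycell_subset_closure[OF in_faces_square_of] mem_ycell_index by blast
    ultimately show "x \<in> \<Union>F"
      by (auto simp: F_def)
  qed
  ultimately show ?thesis
    by blast
qed

lemma neighbours_subset:
  "neighbours L j (xcell L j k) \<subseteq> xcell L j ` (\<Union>f\<in>faces k. \<Union>g\<in>glued L j f. star g)"
proof
  fix c'
  assume "c' \<in> neighbours L j (xcell L j k)"
  then have "XcellAny L j c'" and meet: "Xclosed L j c' \<inter> Xclosed L j (xcell L j k) \<noteq> {}"
    by (simp_all add: neighbours_def)
  then obtain k' where k': "c' = xcell L j k'"
    using XcellAny_iff by blast
  from meet obtain z where z: "z \<in> Xclosed L j (xcell L j k')" "z \<in> Xclosed L j (xcell L j k)"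
    unfolding k' by blast
  obtain q where q: "hatpi L j q = z" "ycell_index L j q \<in> faces k"
    using z(2) by (rule mem_Xclosed_xcell)
  obtain q' where q': "hatpi L j q' = z" "ycell_index L j q' \<in> faces k'"
    using z(1) by (rule mem_Xclosed_xcell)
  have "ycell_index L j q' \<in> glued L j (ycell_index L j q)"
    using xcell_ycell_index_eq q(1) q'(1) by (simp add: glued_def)
  with q(2) q'(2) have "k' \<in> (\<Union>f\<in>faces k. \<Union>g\<in>glued L j f. star g)"
    by (auto simp: faces_iff_star)
  with k' show "c' \<in> xcell L j ` (\<Union>f\<in>faces k. \<Union>g\<in>glued L j f. star g)"
    by blast
qed

lemma neighbours_card:
  assumes "XcellAny L j t"
  shows "finite (neighbours L j t) \<and> card (neighbours L j t) \<le> 243"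
proof -
  obtain k where t: "t = xcell L j k"
    using assms XcellAny_iff by blast
  have "finite (\<Union>g\<in>glued L j f. star g) \<and> card (\<Union>g\<in>glued L j f. star g) \<le> 27" for f
  proof -
    have "finite (\<Union>g\<in>glued L j f. star g) \<and> card (\<Union>g\<in>glued L j f. star g) \<le> card (glued L j f) * 9"
      using glued_card finite_star card_star by (intro finite_card_UN_le) auto
    then show ?thesis
      using glued_card[of j f] by linarith
  qed
  then have S: "finite (\<Union>f\<in>faces k. \<Union>g\<in>glued L j f. star g)
      \<and> card (\<Union>f\<in>faces k. \<Union>g\<in>glued L j f. star g) \<le> card (faces k) * 27"
    using finite_faces by (intro finite_card_UN_le)
  moreover have "card (faces k) * 27 \<le> 243"
    using card_faces[of k] by simp
  ultimately show ?thesis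
    using neighbours_subset[of j k] finite_card_le_if_subset_image unfolding t by (meson le_trans)
qed

lemma ball_cells_card:
  assumes "XcellAny L j c"
  shows "finite (ball_cells L j n c) \<and> card (ball_cells L j n c) \<le> 244 ^ n"
proof (induction n)
  case (Suc n)
  let ?U = "\<Union>(neighbours L j ` ball_cells L j n c)"
  have U: "finite ?U \<and> card ?U \<le> card (ball_cells L j n c) * 243"
    using Suc.IH neighbours_card ball_cells_XcellAny[OF assms] by (intro finite_card_UN_le) auto
  have "card (insert c ?U) \<le> Suc (card ?U)"
    using U by (simp add: card_insert_if)
  also have "\<dots> \<le> Suc (244 ^ n * 243)"
    using U Suc.IH by simp
  also have "\<dots> \<le> 244 ^ Suc n"
    using one_le_power[of "244::nat" n] by simp
  finally show ?case
    using U by simp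
qed simp

lemma cball_comb_cells_subset:
  "{c'. XcellAny L j c' \<and> c' \<subseteq> cball_comb L j N c} \<subseteq> \<Union>(neighbours L j ` ball_cells L j N c)"
proof
  fix c'
  assume "c' \<in> {c'. XcellAny L j c' \<and> c' \<subseteq> cball_comb L j N c}"
  then have c': "XcellAny L j c'" "c' \<subseteq> cball_comb L j N c"
    by simp_all
  then obtain k where k: "c' = xcell L j k"
    using XcellAny_iff by blast
  then obtain z where "z \<in> c'"
    using ycell_nonempty by blast
  then obtain cs where cs: "cs \<noteq> []" "length cs \<le> N" "hd cs = c" "\<forall>t\<in>set cs. XcellAny L j t"
    "successively (\<lambda>s t. Xclosed L j s \<inter> Xclosed L j t \<noteq> {}) cs" "z \<in> Xclosed L j (last cs)"
    using c'(2) unfolding cball_comb_def successively_conv_nth by blast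
  have "z \<in> Xclosed L j c'"
    using \<open>z \<in> c'\<close> xcell_subset_Xclosed k by blast
  with c'(1) cs(6) have "c' \<in> neighbours L j (last cs)"
    by (auto simp: neighbours_def)
  with chain_last_in_ball_cells[OF cs(1-5)] show "c' \<in> \<Union>(neighbours L j ` ball_cells L j N c)"
    by blast
qed

lemma cball_comb_card:
  "\<exists>C :: nat. \<forall>(j :: int) c. XcellAny L j c \<longrightarrow>
     finite {c'. XcellAny L j c' \<and> c' \<subseteq> cball_comb L j N c}
     \<and> card {c'. XcellAny L j c' \<and> c' \<subseteq> cball_comb L j N c} \<le> C"
proof (intro exI allI impI)
  fix j c
  assume c: "XcellAny L j c"
  have "finite (\<Union>(neighbours L j ` ball_cells L j N c))
      \<and> card (\<Union>(neighbours L j ` ball_cells L j N c)) \<le> card (ball_cells L j N c) * 243"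
    using ball_cells_card[OF c] neighbours_card ball_cells_XcellAny[OF c]
    by (intro finite_card_UN_le) auto
  moreover have "card (ball_cells L j N c) * 243 \<le> 244 ^ N * 243"
    using ball_cells_card[OF c] by simp
  ultimately show "finite {c'. XcellAny L j c' \<and> c' \<subseteq> cball_comb L j N c}
      \<and> card {c'. XcellAny L j c' \<and> c' \<subseteq> cball_comb L j N c} \<le> 244 ^ N * 243"
    using cball_comb_cells_subset by (meson card_mono finite_subset le_trans)
qed

end

section \<open>The maps pi_j\<close>

lemma skel1_point:
  assumes "P \<in> skel1 L j"
  obtains p where "P = hatpi L j p" "(\<exists>u. fst p = of_int u * xmesh j) \<or> (\<exists>b. snd p = of_int b * ymesh L j)"
proof -
  obtain c where c: "Xcell L j 0 c \<or> Xcell L j 1 c" "P \<in> c"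
    using assms by (auto simp: skel1_def)
  then obtain k where k: "cell_dim k \<le> 1" "c = xcell L j k"
    by (metis Xcell_iff le_refl zero_le_one)
  with c(2) obtain p where p: "p \<in> ycell L j k" "P = hatpi L j p"
    by blast
  from k(1) have "\<not> snd (fst k) \<or> \<not> snd (snd k)"
    by (auto simp: cell_dim_def)
  with p(1) have "(\<exists>u. fst p = of_int u * xmesh j) \<or> (\<exists>b. snd p = of_int b * ymesh L j)"
    by (cases k) (auto simp: ycell_def grid_cell_def mem_Times_iff)
  with p(2) show ?thesis
    using that by blast
qed

context standing_construction
begin

lemma block_off_xgrid:
  assumes a: "a \<in> {1, 2, 3}" and p: "p \<in> block L j n l a"
  shows "fst p \<noteq> of_int u * xmesh j"
proof
  assume u: "fst p = of_int u * xmesh j"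
  have "xmesh j = 4 * 4 powi (- (j + 1))"
    using power_int_neg_split[of 4 j "j + 1"] by (simp add: xmesh_def)
  with u p have "of_int (4 * u) * (4::real) powi (- (j + 1)) = of_int (4 * n + a) * 4 powi (- (j + 1))"
    by (simp add: block_def mem_Times_iff)
  then have "4 * u = 4 * n + a"
    by simp
  with a show False
    by (auto; presburger)
qed

lemma block_rel_on_ygrid:
  assumes h: "block_rel L j n l a p q"
    and p: "snd p = of_int b * ymesh L j" and q: "snd q = of_int b' * ymesh L j"
  shows "p = q"
proof -
  obtain t :: int where t: "snd q = snd p + of_int t * block_step L j" "\<bar>t\<bar> \<le> 2"
    using h by (rule block_rel_shift_bound)
  have "ymesh L j = mv L * block_step L j"
    using power_int_neg_split[of "mv L" j "j + 1"] mv_pos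
    by (simp add: ymesh_def block_step_def)
  with p q t(1) have "of_int ((b' - b) * (3 * int L)) * block_step L j = of_int t * block_step L j"
    by (simp add: mv_def algebra_simps)
  then have "real_of_int ((b' - b) * (3 * int L)) = real_of_int t"
    using block_step_pos[of j] by auto
  then have t_eq: "(b' - b) * (3 * int L) = t"
    by (simp only: of_int_eq_iff)
  have "t = 0"
  proof (rule ccontr)
    assume "t \<noteq> 0"
    with t_eq have "1 \<le> \<bar>b' - b\<bar>"
      by auto
    then have "1 * (3 * int L) \<le> \<bar>b' - b\<bar> * (3 * int L)"
      by (intro mult_right_mono) simp_all
    also have "\<dots> = \<bar>t\<bar>"
      by (simp add: t_eq[symmetric] abs_mult)
    finally show False
      using t(2) L_pos by linarith
  qed
  with t(1) block_rel_fst[OF h] show ?thesis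
    by (simp add: prod_eq_iff)
qed

lemma Rj_succ_on_xgrid:
  assumes "fst p = of_int u * xmesh j" "(p, q) \<in> Rj L (j + 1)"
  shows "(p, q) \<in> Rj L j"
proof -
  have "\<not> block_rel L j n l a p q" for n l a
    using assms(1) block_off_xgrid[of a p j n l u] unfolding block_rel_def by blast
  then show ?thesis
    using assms(2) Rj_succ_iff by blast
qed

lemma Rj_succ_on_ygrid:
  assumes "snd p = of_int b * ymesh L j" "snd q = of_int b' * ymesh L j" "(p, q) \<in> Rj L (j + 1)"
  shows "(p, q) \<in> Rj L j"
proof -
  have "p = q" if "block_rel L j n l a p q" for n l a
    using that assms(1,2) by (rule block_rel_on_ygrid)
  then show ?thesis
    using assms(3) Rj_succ_iff Rj_refl by blast
qed

lemma pij_inj_on_skel1: "inj_on (pij L j) (skel1 L j)"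
proof (rule inj_onI)
  fix P Q
  assume P: "P \<in> skel1 L j" and Q: "Q \<in> skel1 L j" and eq: "pij L j P = pij L j Q"
  obtain p where p: "P = hatpi L j p" "(\<exists>u. fst p = of_int u * xmesh j) \<or> (\<exists>b. snd p = of_int b * ymesh L j)"
    using P by (rule skel1_point)
  obtain q where q: "Q = hatpi L j q" "(\<exists>u. fst q = of_int u * xmesh j) \<or> (\<exists>b. snd q = of_int b * ymesh L j)"
    using Q by (rule skel1_point)
  have pq: "(p, q) \<in> Rj L (j + 1)"
    using eq by (simp add: p q pij_hatpi hatpi_eq_iff)
  have "(p, q) \<in> Rj L j"
  proof (cases "\<exists>u. fst p = of_int u * xmesh j \<or> fst q = of_int u * xmesh j")
    case True
    then show ?thesis
      using Rj_succ_on_xgrid pq Rj_sym by blast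
  next
    case False
    then show ?thesis
      using p(2) q(2) Rj_succ_on_ygrid pq by blast
  qed
  then show "P = Q"
    by (simp add: p q hatpi_eq_iff)
qed

lemma pij_fibre_vertex:
  assumes P: "P \<in> X L j" and vertex: "Xcell L j 0 {P}"
  shows "{q \<in> X L j. pij L j q = pij L j P} = {P}"
proof -
  obtain k where k: "cell_dim k = 0" "{P} = xcell L j k"
    using vertex by (auto simp: Xcell_iff)
  obtain v where v: "v \<in> ycell L j k"
    using ycell_nonempty by blast
  with k(2) have P_v: "P = hatpi L j v"
    by blast
  from k(1) v have u: "fst v = of_int (fst (fst k)) * xmesh j"
    by (auto simp: cell_dim_def ycell_def grid_cell_def mem_Times_iff)
  have "Q = P" if Q: "Q \<in> X L j" and eq: "pij L j Q = pij L j P" for Q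
  proof -
    obtain r where r: "Q = hatpi L j r"
      using Q unfolding X_def by blast
    with eq have "(v, r) \<in> Rj L (j + 1)"
      by (simp add: P_v pij_hatpi hatpi_eq_iff Rj_sym)
    then have "(v, r) \<in> Rj L j"
      by (rule Rj_succ_on_xgrid[OF u])
    then show "Q = P"
      by (simp add: r P_v hatpi_eq_iff Rj_sym)
  qed
  with P show ?thesis
    by blast
qed

end

section \<open>Stars of vertices\<close>

lemma rtranclp_imp_chain:
  assumes "R\<^sup>*\<^sup>* x y" "P x" "\<And>a b. R a b \<Longrightarrow> P b"
  obtains xs where "xs \<noteq> []" "hd xs = x" "last xs = y" "\<forall>z\<in>set xs. P z" "successively R xs"
  using assms(1)
proof (induction arbitrary: thesis rule: rtranclp_induct)
  case base
  show ?case
    using base.prems(1)[of "[x]"] assms(2) by simp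
next
  case (step y z)
  obtain xs where xs: "xs \<noteq> []" "hd xs = x" "last xs = y" "\<forall>z\<in>set xs. P z" "successively R xs"
    using step.IH by blast
  show ?case
    using step.prems(1)[of "xs @ [z]"] xs step.hyps(2) assms(3)
    by (simp add: successively_append_iff)
qed

definition grid_point :: "nat \<Rightarrow> int \<Rightarrow> int \<Rightarrow> int \<Rightarrow> real \<times> real" where
  "grid_point L j a b = (of_int a * xmesh j, of_int b * ymesh L j)"

definition vedge :: "int \<Rightarrow> int \<Rightarrow> cell_index" where
  "vedge a b = ((a, False), (b, True))"

definition adjacent_at :: "nat \<Rightarrow> int \<Rightarrow> (real \<times> real) set \<Rightarrow> (real \<times> real) set set \<Rightarrow>
    (real \<times> real) set set \<Rightarrow> bool" where
  "adjacent_at L j v t t' \<longleftrightarrow> XcellAny L j t \<and> XcellAny L j t' \<and> v \<in> Xclosed L j t \<and> v \<in> Xclosed L j t' \<and>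
     (\<exists>r. Xcell L j 1 r \<and> Xclosed L j r \<subseteq> Xclosed L j t \<and> Xclosed L j r \<subseteq> Xclosed L j t')"

lemma symp_adjacent_at: "symp (adjacent_at L j v)"
  by (rule sympI) (auto simp: adjacent_at_def)

lemma adjacent_at_rtranclp_sym:
  "(adjacent_at L j v)\<^sup>*\<^sup>* t t' \<Longrightarrow> (adjacent_at L j v)\<^sup>*\<^sup>* t' t"
  using sympD[OF symp_rtranclp[OF symp_adjacent_at]] by blast

context standing_construction
begin

lemma ycell_vertex: "ycell L j ((a, False), (b, False)) = {grid_point L j a b}"
  by (simp add: ycell_def grid_cell_def grid_point_def)

lemma grid_point_mem_vblock_iff:
  "grid_point L j a b \<in> vblock L j u lo M \<longleftrightarrow> a = u \<and> lo \<le> b \<and> b \<le> lo + 2 * M"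
  using xmesh_pos[of j] ymesh_pos[of j]
  by (simp add: grid_point_def vblock_def mem_Times_iff mult_le_cancel_right_pos del: of_int_add of_int_mult)

lemma ycell_index_grid_point: "ycell_index L j (grid_point L j a b) = ((a, False), (b, False))"
  using mem_ycell_iff[of "grid_point L j a b" j "((a, False), (b, False))"]
  by (simp add: ycell_vertex)

lemma adjacent_at_face:
  assumes q: "hatpi L j q = v" "ycell_index L j q \<in> faces kr"
    and kr: "cell_dim kr = 1" "kr \<in> faces kt"
  shows "adjacent_at L j v (xcell L j kr) (xcell L j kt)"
proof -
  have "closure (ycell L j kr) \<subseteq> closure (ycell L j kt)"
    using ycell_subset_closure[OF kr(2)] by (simp add: closure_minimal)
  then have "Xclosed L j (xcell L j kr) \<subseteq> Xclosed L j (xcell L j kt)"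
    by (simp add: Xclosed_xcell image_mono)
  moreover have "v \<in> Xclosed L j (xcell L j kr)" "v \<in> Xclosed L j (xcell L j kt)"
    using q faces_trans[OF kr(2) q(2)]
    by (auto simp: Xclosed_xcell mem_closure_ycell_iff)
  moreover have "Xcell L j 1 (xcell L j kr)"
    using kr(1) Xcell_iff by blast
  ultimately show ?thesis
    unfolding adjacent_at_def XcellAny_iff by blast
qed

(* The eight cells around a grid vertex form a cycle in which consecutive cells share an edge
   through the vertex. *)
lemma vertex_star_connected:
  assumes v: "hatpi L j (grid_point L j a b) = v"
    and k: "k \<in> star ((a, False), (b, False))" "k \<noteq> ((a, False), (b, False))"
  shows "(adjacent_at L j v)\<^sup>*\<^sup>* (xcell L j (vedge a b)) (xcell L j k)"
proof -
  let ?A = "adjacent_at L j v" and ?X = "xcell L j"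
  note q = ycell_index_grid_point
  have square: "?A (?X ((a, False), (b', True))) (?X ((a', True), (b', True)))"
    "?A (?X ((a', True), (b, False))) (?X ((a', True), (b', True)))"
    if "a' \<in> {a - 1, a}" "b' \<in> {b - 1, b}" for a' b'
    using that by (auto intro!: adjacent_at_face[OF v] simp: q faces_def grid_faces_def cell_dim_def)
  have reach: "?A\<^sup>*\<^sup>* (?X (vedge a b)) (?X ((a', True), (b', True)))"
    "?A\<^sup>*\<^sup>* (?X (vedge a b)) (?X ((a', True), (b, False)))"
    if "a' \<in> {a - 1, a}" "b' \<in> {b - 1, b}" for a' b'
  proof -
    have top: "?A\<^sup>*\<^sup>* (?X (vedge a b)) (?X ((a', True), (b, True)))"
      using square(1)[OF that(1), of b] by (simp add: vedge_def)
    moreover have side: "?A\<^sup>*\<^sup>* (?X (vedge a b)) (?X ((a', True), (b, False)))"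
      using top square(2)[OF that(1), of b] symp_adjacent_at
      by (metis insertCI rtranclp.rtrancl_into_rtrancl sympD)
    moreover have "?A\<^sup>*\<^sup>* (?X (vedge a b)) (?X ((a', True), (b - 1, True)))"
      using side square(2)[OF that(1), of "b - 1"] by (simp add: rtranclp.rtrancl_into_rtrancl)
    ultimately show "?A\<^sup>*\<^sup>* (?X (vedge a b)) (?X ((a', True), (b', True)))"
      "?A\<^sup>*\<^sup>* (?X (vedge a b)) (?X ((a', True), (b, False)))"
      using that(2) by auto
  qed
  have "?A\<^sup>*\<^sup>* (?X (vedge a b)) (?X ((a, False), (b - 1, True)))"
    using reach(1)[of a "b - 1"] square(1)[of a "b - 1"] symp_adjacent_at
    by (metis insertCI rtranclp.rtrancl_into_rtrancl sympD)
  with reach k show ?thesis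
    by (auto simp: star_def grid_star_def vedge_def)
qed

lemma vblock_vedges_glued:
  assumes glued: "vblock_glued L j u lo M"
    and x: "lo \<le> x" "x + 1 \<le> lo + 2 * M" and y: "lo \<le> y" "y + 1 \<le> lo + 2 * M" and dvd: "M dvd y - x"
  shows "xcell L j (vedge u x) = xcell L j (vedge u y)"
proof -
  define mid where "mid z = (of_int u * xmesh j, (of_int z + 1 / 2) * ymesh L j)" for z :: int
  have mid_in: "mid z \<in> ycell L j (vedge u z)" "mid z \<in> vblock L j u lo M"
    if "lo \<le> z" "z + 1 \<le> lo + 2 * M" for z
  proof -
    have "of_int lo \<le> of_int z + (1 / 2 :: real)" "of_int z + 1 / 2 \<le> real_of_int (lo + 2 * M)"
      using that by linarith+
    then show "mid z \<in> ycell L j (vedge u z)" "mid z \<in> vblock L j u lo M"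
      using ymesh_pos[of j]
      by (auto simp: mid_def vedge_def ycell_def grid_cell_def vblock_def mult_right_mono)
  qed
  obtain t where "y = x + t * M"
    using dvd by (metis add_diff_cancel_left' diff_add_cancel dvdE mult.commute)
  then have "snd (mid y) = snd (mid x) + of_int (t * M) * ymesh L j"
    by (simp add: mid_def algebra_simps)
  then have "(mid x, mid y) \<in> Rj L j"
    using glued mid_in x y unfolding vblock_glued_def by blast
  then show ?thesis
    using Rj_glues_cells(2) mid_in x y by metis
qed

lemma vblock_vedge_down:
  assumes glued: "vblock_glued L j u lo M" and v: "hatpi L j (grid_point L j u b) = v"
    and b: "lo \<le> b" "b \<le> lo + 2 * M" and m: "lo \<le> m" "m \<le> lo + 2 * M" and mb: "M dvd m - b"
  shows "(adjacent_at L j v)\<^sup>*\<^sup>* (xcell L j (vedge u m)) (xcell L j (vedge u (m - 1)))"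
proof -
  obtain t where "m = b + t * M"
    using mb by (metis add_diff_cancel_left' diff_add_cancel dvdE mult.commute)
  then have "snd (grid_point L j u m) = snd (grid_point L j u b) + of_int (t * M) * ymesh L j"
    by (simp add: grid_point_def algebra_simps)
  moreover have "grid_point L j u b \<in> vblock L j u lo M" "grid_point L j u m \<in> vblock L j u lo M"
    using b m by (simp_all add: grid_point_mem_vblock_iff)
  ultimately have "(grid_point L j u b, grid_point L j u m) \<in> Rj L j"
    using glued unfolding vblock_glued_def by blast
  with v have "hatpi L j (grid_point L j u m) = v"
    by (metis hatpi_eq_iff)
  then show ?thesis
    by (rule vertex_star_connected) (auto simp: star_def grid_star_def vedge_def)
qed

lemma vblock_ends_connected:
  assumes glued: "vblock_glued L j u lo M" and M: "M \<ge> 1" and v: "hatpi L j (grid_point L j u b) = v"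
    and b: "lo \<le> b" "b \<le> lo + 2 * M" and lo_b: "M dvd lo - b"
  shows "(adjacent_at L j v)\<^sup>*\<^sup>* (xcell L j (vedge u lo)) (xcell L j (vedge u (lo + 2 * M)))"
proof -
  let ?C = "\<lambda>x y. (adjacent_at L j v)\<^sup>*\<^sup>* (xcell L j (vedge u x)) (xcell L j (vedge u y))"
  have shift: "M dvd lo + k * M - b" for k
  proof -
    have "M dvd (lo - b) + k * M"
      using lo_b by (intro dvd_add) simp_all
    also have "(lo - b) + k * M = lo + k * M - b"
      by simp
    finally show ?thesis .
  qed
  have "?C lo (lo + M)"
    using vblock_vedges_glued[OF glued, of lo "lo + M"] M by simp
  also have "?C (lo + M) (lo + M - 1)"
    using vblock_vedge_down[OF glued v b, of "lo + M"] M shift[of 1] by simp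
  also have "?C (lo + M - 1) (lo + 2 * M - 1)"
    using vblock_vedges_glued[OF glued, of "lo + M - 1" "lo + 2 * M - 1"] M by simp
  also have "?C (lo + 2 * M - 1) (lo + 2 * M)"
    using vblock_vedge_down[OF glued v b, of "lo + 2 * M"] M shift[of 2] adjacent_at_rtranclp_sym
    by simp
  finally show ?thesis .
qed

(* If neither the edges above nor the edges below the two vertices are glued, the vertices are
   the two ends of the block, and they are linked through its midpoint. *)
lemma vblock_vedges_connected:
  assumes glued: "vblock_glued L j u lo M" and M: "M \<ge> 1" and v: "hatpi L j (grid_point L j u b) = v"
    and b: "lo \<le> b" "b \<le> lo + 2 * M" and b': "lo \<le> b'" "b' \<le> lo + 2 * M" and dvd: "M dvd b' - b"
  shows "(adjacent_at L j v)\<^sup>*\<^sup>* (xcell L j (vedge u b)) (xcell L j (vedge u b'))"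
proof -
  let ?C = "\<lambda>x y. (adjacent_at L j v)\<^sup>*\<^sup>* (xcell L j (vedge u x)) (xcell L j (vedge u y))"
  have up: "?C x y" if "lo \<le> x" "x + 1 \<le> lo + 2 * M" "lo \<le> y" "y + 1 \<le> lo + 2 * M" "M dvd y - x"
    for x y
    using vblock_vedges_glued[OF glued that] by simp
  have down: "?C m (m - 1)" if "lo \<le> m" "m \<le> lo + 2 * M" "M dvd m - b" for m
    using vblock_vedge_down[OF glued v b that] .
  consider "b + 1 \<le> lo + 2 * M" "b' + 1 \<le> lo + 2 * M" | "lo + 1 \<le> b" "lo + 1 \<le> b'"
    | "b = lo" "b' = lo + 2 * M" | "b = lo + 2 * M" "b' = lo"
    using b b' M by linarith
  then show ?thesis
  proof cases
    case 1
    then show ?thesis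
      using b b' dvd by (intro up) simp_all
  next
    case 2
    have "?C b (b - 1)"
      using b by (intro down) simp_all
    also have "?C (b - 1) (b' - 1)"
      using 2 b b' dvd by (intro up) (simp_all add: algebra_simps)
    also have "?C (b' - 1) b'"
      using down[of b'] b' dvd adjacent_at_rtranclp_sym by simp
    finally show ?thesis .
  next
    case 3
    then show ?thesis
      using vblock_ends_connected[OF glued M v b] by simp
  next
    case 4
    then show ?thesis
      using vblock_ends_connected[OF glued M v b] adjacent_at_rtranclp_sym by simp
  qed
qed

lemma vertex_vedges_connected:
  assumes v: "hatpi L j (grid_point L j a b) = v" and v': "hatpi L j (grid_point L j a' b') = v"
  shows "(adjacent_at L j v)\<^sup>*\<^sup>* (xcell L j (vedge a b)) (xcell L j (vedge a' b'))"
proof (cases "grid_point L j a b = grid_point L j a' b'")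
  case True
  then have "a = a'" "b = b'"
    using ycell_index_grid_point[of j] by (metis prod.inject)+
  then show ?thesis
    by simp
next
  case False
  have "(grid_point L j a b, grid_point L j a' b') \<in> Rj L j"
    using v v' by (simp add: hatpi_eq_iff[symmetric])
  with False obtain i n l a0 where ij: "i < j" and h: "block_rel L i n l a0 (grid_point L j a b) (grid_point L j a' b')"
    using Rj_iff by blast
  then have "a0 \<in> {1, 2, 3}"
    by (simp add: block_rel_def)
  then obtain u lo M where M: "M \<ge> 1" and rel: "\<And>p q. block_rel L i n l a0 p q \<longleftrightarrow>
      p \<in> vblock L j u lo M \<and> q \<in> vblock L j u lo M \<and> (\<exists>t. snd q = snd p + of_int (t * M) * ymesh L j)"
    using block_rel_in_grid_units[OF ij] by metis
  have glued: "vblock_glued L j u lo M"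
    unfolding vblock_glued_def using rel ij Rj_iff by blast
  have "grid_point L j a b \<in> vblock L j u lo M" "grid_point L j a' b' \<in> vblock L j u lo M"
    and "\<exists>t. snd (grid_point L j a' b') = snd (grid_point L j a b) + of_int (t * M) * ymesh L j"
    using h rel by blast+
  then obtain t where t: "snd (grid_point L j a' b') = snd (grid_point L j a b) + of_int (t * M) * ymesh L j"
    and b: "a = u" "lo \<le> b" "b \<le> lo + 2 * M" and b': "a' = u" "lo \<le> b'" "b' \<le> lo + 2 * M"
    by (auto simp: grid_point_mem_vblock_iff)
  have "of_int b' * ymesh L j = of_int (b + t * M) * ymesh L j"
    using t by (simp add: grid_point_def algebra_simps)
  then have "real_of_int b' = real_of_int (b + t * M)"
    using ymesh_pos[of j] by auto
  then have "b' = b + t * M"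
    by (simp only: of_int_eq_iff)
  then have "M dvd b' - b"
    by simp
  then have "(adjacent_at L j v)\<^sup>*\<^sup>* (xcell L j (vedge u b)) (xcell L j (vedge u b'))"
    using vblock_vedges_connected[OF glued M] b b' v by simp
  with b(1) b'(1) show ?thesis
    by simp
qed

lemma vertex_star_cell:
  assumes v: "Xcell L j 0 {v}" and s: "Xcell L j d s" "1 \<le> d" and vs: "v \<in> Xclosed L j s"
  obtains a b where "hatpi L j (grid_point L j a b) = v"
    "(adjacent_at L j v)\<^sup>*\<^sup>* (xcell L j (vedge a b)) s"
proof -
  obtain k0 where k0: "cell_dim k0 = 0" "{v} = xcell L j k0"
    using v Xcell_iff by blast
  obtain q0 where q0: "q0 \<in> ycell L j k0"
    using ycell_nonempty by blast
  obtain ks where ks: "cell_dim ks = d" "s = xcell L j ks"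
    using s Xcell_iff by blast
  obtain q where q: "hatpi L j q = v" "ycell_index L j q \<in> faces ks"
    using vs unfolding ks(2) by (rule mem_Xclosed_xcell)
  have "hatpi L j q0 = v"
    using k0(2) q0 by blast
  with q(1) have "(q0, q) \<in> Rj L j"
    by (simp add: hatpi_eq_iff[symmetric])
  then have "cell_dim (ycell_index L j q) = 0"
    using Rj_glues_cells(1)[OF _ q0 mem_ycell_index] k0(1) by simp
  then obtain a b where ab: "ycell_index L j q = ((a, False), (b, False))"
    by (cases "ycell_index L j q") (auto simp: cell_dim_def)
  then have "q = grid_point L j a b"
    using mem_ycell_index[of q j] ycell_vertex by simp
  moreover have "ks \<in> star ((a, False), (b, False))" "ks \<noteq> ((a, False), (b, False))"
    using q(2) ab ks(1) s(2) by (auto simp: faces_iff_star cell_dim_def)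
  ultimately show ?thesis
    using that q(1) vertex_star_connected ks(2) by blast
qed

lemma vertex_star_chain:
  assumes v: "Xcell L j 0 {v}" and s: "Xcell L j d s" "1 \<le> d" and s': "Xcell L j d' s'" "1 \<le> d'"
    and vs: "v \<in> Xclosed L j s" and vs': "v \<in> Xclosed L j s'"
  shows "\<exists>ts. ts \<noteq> [] \<and> hd ts = s \<and> last ts = s' \<and>
           (\<forall>t\<in>set ts. XcellAny L j t \<and> v \<in> Xclosed L j t) \<and>
           (\<forall>i. Suc i < length ts \<longrightarrow>
              (\<exists>r. Xcell L j 1 r \<and> Xclosed L j r \<subseteq> Xclosed L j (ts ! i)
                   \<and> Xclosed L j r \<subseteq> Xclosed L j (ts ! Suc i)))"
proof -
  let ?A = "adjacent_at L j v"
  obtain a b where ab: "hatpi L j (grid_point L j a b) = v" "?A\<^sup>*\<^sup>* (xcell L j (vedge a b)) s"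
    using vertex_star_cell[OF v s vs] by blast
  obtain a' b' where ab': "hatpi L j (grid_point L j a' b') = v" "?A\<^sup>*\<^sup>* (xcell L j (vedge a' b')) s'"
    using vertex_star_cell[OF v s' vs'] by blast
  have "?A\<^sup>*\<^sup>* s (xcell L j (vedge a b))"
    using ab(2) by (rule adjacent_at_rtranclp_sym)
  also have "?A\<^sup>*\<^sup>* \<dots> (xcell L j (vedge a' b'))"
    using ab(1) ab'(1) by (rule vertex_vedges_connected)
  also note ab'(2)
  finally have "?A\<^sup>*\<^sup>* s s'" .
  moreover have "XcellAny L j s \<and> v \<in> Xclosed L j s"
    using s(1) vs by (auto simp: XcellAny_def)
  moreover have "XcellAny L j t' \<and> v \<in> Xclosed L j t'" if "?A t t'" for t t'
    using that by (simp add: adjacent_at_def)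
  ultimately obtain ts where "ts \<noteq> []" "hd ts = s" "last ts = s'"
    "\<forall>t\<in>set ts. XcellAny L j t \<and> v \<in> Xclosed L j t" "successively ?A ts"
    by (rule rtranclp_imp_chain)
  then show ?thesis
    by (auto simp: successively_conv_nth adjacent_at_def)
qed

end

theorem mainTheorem5:
  fixes L :: nat
  assumes "L \<ge> 100"
  shows "(\<forall>j :: int.
    \<comment> \<open>(1)\<close>
    inj_on (pij L j) (skel1 L j)
    \<comment> \<open>(2)\<close>
  \<and> (\<forall>p \<in> X L j. Xcell L j 0 {p} \<longrightarrow> {q \<in> X L j. pij L j q = pij L j p} = {p})
    \<comment> \<open>(3)\<close>
  \<and> (\<forall>p \<in> X L j. finite {x. hatpi L j x = p} \<and> card {x. hatpi L j x = p} \<le> 3)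
    \<comment> \<open>(4)\<close>
  \<and> (\<forall>c. XcellAny L j c \<longrightarrow> finite (link L j c) \<and> card (link L j c) \<le> 24)
    \<comment> \<open>(5)\<close>
  \<and> (\<forall>v s s'. Xcell L j 0 {v} \<and> (\<exists>d\<ge>1. Xcell L j d s) \<and> (\<exists>d\<ge>1. Xcell L j d s')
        \<and> v \<in> Xclosed L j s \<and> v \<in> Xclosed L j s' \<longrightarrow>
        (\<exists>ts. ts \<noteq> [] \<and> hd ts = s \<and> last ts = s' \<and>
           (\<forall>t\<in>set ts. XcellAny L j t \<and> v \<in> Xclosed L j t) \<and>
           (\<forall>i. Suc i < length ts \<longrightarrow>
              (\<exists>r. Xcell L j 1 r \<and> Xclosed L j r \<subseteq> Xclosed L j (ts ! i)
                   \<and> Xclosed L j r \<subseteq> Xclosed L j (ts ! Suc i)))))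
    \<comment> \<open>(6)\<close>
  \<and> (\<forall>c. XcellAny L j c \<longrightarrow>
        finite {c'. XcellAny L j c' \<and> c' \<subseteq> Xclosed L j c}
      \<and> card {c'. XcellAny L j c' \<and> c' \<subseteq> Xclosed L j c} \<le> 9)
    \<comment> \<open>(8)\<close>
  \<and> (\<forall>c. Xcell L j 2 c \<longrightarrow>
        (\<exists>F. finite F \<and> card F \<le> 27 \<and> (\<forall>e\<in>F. \<exists>e0. Ycell L j 2 e0 \<and> e = closure e0) \<and>
             {x. hatpi L j x \<in> Xclosed L j c} \<subseteq> \<Union>F)))
    \<comment> \<open>(7)\<close>
  \<and> (\<forall>N. \<exists>C :: nat. \<forall>(j :: int) c. XcellAny L j c \<longrightarrow>
        finite {c'. XcellAny L j c' \<and> c' \<subseteq> cball_comb L j N c}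
      \<and> card {c'. XcellAny L j c' \<and> c' \<subseteq> cball_comb L j N c} \<le> C)"
proof -
  interpret standing_construction L
    using assms by unfold_locales simp
  show ?thesis
    using pij_inj_on_skel1 pij_fibre_vertex hatpi_fibre_card link_card vertex_star_chain
      closed_cell_card Xcell2_preimage_cover cball_comb_card
    by (intro conjI allI impI ballI) auto
qed

end
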